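(* Let $k$ be a positive integer and let $G$ and $G'$ be non-regular graphs with maximum degree $2$ that have the same number of vertices and the same number of edges. If every cycle (component) in $G$ and $G'$ has more than $k$ vertices and every path component of $G$ and $G'$ has at least $k-1$ vertices, then $\mathcal{D}_k(G)=\mathcal{D}_k(G')$.
   Context: The $k$-deck $\mathcal{D}_k(G)$ is the multiset of isomorphism classes of the induced subgraphs of $G$ on $k$ vertices. A graph of maximum degree $2$ has components that are paths and cycles. *)

theory Defs
  imports Main
begin

type_synonym 'a graph = "'a set \<times> 'a set set"

definition simple_graph :: "'a graph \<Rightarrow> bool" where
  "simple_graph G \<longleftrightarrow> finite (fst G) \<and>
     (\<forall>e\<in>snd G. \<exists>u v. u \<noteq> v \<and> e = {u, v} \<and> u \<in> fst G \<and> v \<in> fst G)"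

definition degree :: "'a graph \<Rightarrow> 'a \<Rightarrow> nat" where
  "degree G v = card {u \<in> fst G. {u, v} \<in> snd G}"

definition max_degree_two :: "'a graph \<Rightarrow> bool" where
  "max_degree_two G \<longleftrightarrow> (\<forall>v\<in>fst G. degree G v \<le> 2) \<and> (\<exists>v\<in>fst G. degree G v = 2)"

definition regular :: "'a graph \<Rightarrow> bool" where
  "regular G \<longleftrightarrow> (\<forall>u\<in>fst G. \<forall>v\<in>fst G. degree G u = degree G v)"

definition induced :: "'a graph \<Rightarrow> 'a set \<Rightarrow> 'a graph" where
  "induced G S = (S, {e \<in> snd G. e \<subseteq> S})"

definition graph_iso :: "'a graph \<Rightarrow> 'b graph \<Rightarrow> bool" where
  "graph_iso G H \<longleftrightarrow> (\<exists>f. bij_betw f (fst G) (fst H) \<and>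
     (\<forall>u\<in>fst G. \<forall>v\<in>fst G. {u, v} \<in> snd G \<longleftrightarrow> {f u, f v} \<in> snd H))"

text \<open>Multiplicity of the isomorphism class of H in the k-deck of G.\<close>
definition deck_count :: "'a graph \<Rightarrow> nat \<Rightarrow> nat graph \<Rightarrow> nat" where
  "deck_count G k H = card {S. S \<subseteq> fst G \<and> card S = k \<and> graph_iso (induced G S) H}"

text \<open>Equality of k-decks (as multisets of isomorphism classes): every isomorphism
  class, represented by a graph on natural numbers, occurs equally often.\<close>
definition same_deck :: "nat \<Rightarrow> 'a graph \<Rightarrow> 'b graph \<Rightarrow> bool" where
  "same_deck k G G' \<longleftrightarrow> (\<forall>H :: nat graph. deck_count G k H = deck_count G' k H)"

definition adj :: "'a graph \<Rightarrow> ('a \<times> 'a) set" where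
  "adj G = {(u, v). {u, v} \<in> snd G}"

definition component :: "'a graph \<Rightarrow> 'a \<Rightarrow> 'a set" where
  "component G v = {u. (v, u) \<in> (adj G)\<^sup>*}"

definition components :: "'a graph \<Rightarrow> 'a set set" where
  "components G = component G ` fst G"

text \<open>In a graph of maximum degree 2, a component is a cycle iff all its vertices have
  degree 2; otherwise it is a path (possibly a single vertex).\<close>
definition cycle_component :: "'a graph \<Rightarrow> 'a set \<Rightarrow> bool" where
  "cycle_component G C \<longleftrightarrow> C \<in> components G \<and> (\<forall>v\<in>C. degree G v = 2)"

definition path_component :: "'a graph \<Rightarrow> 'a set \<Rightarrow> bool" where
  "path_component G C \<longleftrightarrow> C \<in> components G \<and> \<not> (\<forall>v\<in>C. degree G v = 2)"

end

theory Submission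
  imports Defs "HOL-Library.Multiset"
begin

text \<open>
  A \<open>k\<close>-set \<open>S\<close> induces the disjoint union of its pieces (the components of \<open>G[S]\<close>), and in a graph
  of maximum degree two whose cycles have more than \<open>k\<close> vertices every connected set of at most
  \<open>k\<close> vertices induces a path. Hence the isomorphism type of \<open>G[S]\<close> is determined by the multiset
  of piece sizes, and the \<open>k\<close>-deck by the numbers of separated families of connected sets with a
  given size profile.

  These numbers obey a Kelly-type recursion: counting pairs of a family with profile \<open>M\<close> and a
  connected \<open>a\<close>-set \<open>X\<close>, and merging \<open>X\<close> with the members it touches, expresses the number of
  families with profile \<open>M + {a}\<close> through families with fewer members and the numbers of connected
  sets with at most \<open>k\<close> vertices. There are \<open>n\<close> connected \<open>1\<close>-sets, \<open>m\<close> connected \<open>2\<close>-sets and,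
  for \<open>2 \<le> c \<le> k\<close>, \<open>m - (c - 2)(n - m)\<close> connected \<open>c\<close>-sets: extending induced paths by one vertex
  loses exactly the paths ending in a leaf, and since no vertex is isolated there are \<open>2(n - m)\<close>
  leaves.
\<close>

section \<open>Connected and separated vertex sets\<close>

definition adj_in :: "'a graph \<Rightarrow> 'a set \<Rightarrow> ('a \<times> 'a) set" where
  "adj_in G X = {(u, v). u \<in> X \<and> v \<in> X \<and> {u, v} \<in> snd G}"

definition connected_set :: "'a graph \<Rightarrow> 'a set \<Rightarrow> bool" where
  "connected_set G X \<longleftrightarrow> X \<subseteq> fst G \<and> X \<noteq> {} \<and> (\<forall>x\<in>X. \<forall>y\<in>X. (x, y) \<in> (adj_in G X)\<^sup>*)"

definition separated :: "'a graph \<Rightarrow> 'a set \<Rightarrow> 'a set \<Rightarrow> bool" where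
  "separated G X Y \<longleftrightarrow> X \<inter> Y = {} \<and> (\<forall>x\<in>X. \<forall>y\<in>Y. {x, y} \<notin> snd G)"

lemma adj_in_rtrancl_sym: "(x, y) \<in> (adj_in G X)\<^sup>* \<Longrightarrow> (y, x) \<in> (adj_in G X)\<^sup>*"
proof -
  have "sym (adj_in G X)" by (auto simp: sym_def adj_in_def insert_commute)
  then show "(x, y) \<in> (adj_in G X)\<^sup>* \<Longrightarrow> (y, x) \<in> (adj_in G X)\<^sup>*"
    by (metis sym_rtrancl symD)
qed

lemma adj_in_rtrancl_mono: "X \<subseteq> Y \<Longrightarrow> (x, y) \<in> (adj_in G X)\<^sup>* \<Longrightarrow> (x, y) \<in> (adj_in G Y)\<^sup>*"
  using rtrancl_mono[of "adj_in G X" "adj_in G Y"] by (auto simp: adj_in_def)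

lemma rtrancl_exit:
  assumes "(x, z) \<in> R\<^sup>*" "x \<in> A" "z \<notin> A"
  shows "\<exists>y w. (y, w) \<in> R \<and> y \<in> A \<and> w \<notin> A"
  using assms by (induction rule: rtrancl_induct) auto

lemma connected_set_finite: "finite (fst G) \<Longrightarrow> connected_set G X \<Longrightarrow> finite X"
  by (auto simp: connected_set_def intro: finite_subset)

lemma connected_set_singleton: "v \<in> fst G \<Longrightarrow> connected_set G {v}"
  by (simp add: connected_set_def)

lemma connected_set_Un:
  assumes cx: "connected_set G X" and cy: "connected_set G Y" and touch: "\<not> separated G X Y"
  shows "connected_set G (X \<union> Y)"
proof -
  let ?R = "(adj_in G (X \<union> Y))\<^sup>*"
  obtain x y where xy: "x \<in> X" "y \<in> Y" "x = y \<or> {x, y} \<in> snd G"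
    using touch unfolding separated_def by blast
  have "(x, y) \<in> ?R" using xy by (auto simp: adj_in_def)
  moreover have "(a, b) \<in> ?R" if "a \<in> X" "b \<in> X" for a b
    using cx that adj_in_rtrancl_mono[of X "X \<union> Y"] by (auto simp: connected_set_def)
  moreover have "(a, b) \<in> ?R" if "a \<in> Y" "b \<in> Y" for a b
    using cy that adj_in_rtrancl_mono[of Y "X \<union> Y"] by (auto simp: connected_set_def)
  ultimately have "(a, b) \<in> ?R" if "a \<in> X \<union> Y" "b \<in> X \<union> Y" for a b
    using that xy adj_in_rtrancl_sym by (metis Un_iff rtrancl_trans)
  then show ?thesis using cx cy by (auto simp: connected_set_def)
qed

lemma connected_set_Union:
  assumes "finite J" "connected_set G X" "\<forall>Y\<in>J. connected_set G Y \<and> \<not> separated G X Y"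
  shows "connected_set G (X \<union> \<Union>J)"
  using assms
proof (induction J rule: finite_induct)
  case (insert Y J)
  have "\<not> separated G (X \<union> \<Union>J) Y"
    using insert.prems by (auto simp: separated_def)
  moreover have "connected_set G (X \<union> \<Union>J)" "connected_set G Y"
    using insert by simp_all
  ultimately have "connected_set G ((X \<union> \<Union>J) \<union> Y)"
    using connected_set_Un by blast
  then show ?case by (simp add: Un_ac)
qed simp

lemma separated_sym: "separated G X Y \<Longrightarrow> separated G Y X"
  unfolding separated_def by (metis Int_commute insert_commute)

lemma separated_mono: "separated G X Y \<Longrightarrow> X' \<subseteq> X \<Longrightarrow> Y' \<subseteq> Y \<Longrightarrow> separated G X' Y'"
  unfolding separated_def by blast

lemma separated_Un_left: "separated G A Z \<Longrightarrow> separated G B Z \<Longrightarrow> separated G (A \<union> B) Z"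
  by (auto simp: separated_def)

lemma separated_Union_left: "(\<And>Y. Y \<in> J \<Longrightarrow> separated G Y Z) \<Longrightarrow> separated G (\<Union>J) Z"
  by (auto simp: separated_def)

lemma separated_Union_right: "(\<And>Z. Z \<in> P \<Longrightarrow> separated G Y Z) \<Longrightarrow> separated G Y (\<Union>P)"
  by (auto simp: separated_def)

lemma connected_set_not_separated_self: "connected_set G X \<Longrightarrow> \<not> separated G X X"
  by (auto simp: separated_def connected_set_def)

definition separated_family :: "'a graph \<Rightarrow> 'a set set \<Rightarrow> bool" where
  "separated_family G P \<longleftrightarrow> finite P \<and> (\<forall>Y\<in>P. connected_set G Y) \<and>
     (\<forall>Y\<in>P. \<forall>Z\<in>P. Y \<noteq> Z \<longrightarrow> separated G Y Z)"

definition profile :: "'a set set \<Rightarrow> nat multiset" where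
  "profile P = image_mset card (mset_set P)"

definition families :: "'a graph \<Rightarrow> nat multiset \<Rightarrow> 'a set set set" where
  "families G M = {P. separated_family G P \<and> profile P = M}"

lemma separated_family_subset: "separated_family G P \<Longrightarrow> Q \<subseteq> P \<Longrightarrow> separated_family G Q"
  unfolding separated_family_def by (meson finite_subset subsetD)

lemma separated_family_insert:
  assumes "separated_family G P" "connected_set G Y" "\<And>Z. Z \<in> P \<Longrightarrow> separated G Y Z"
  shows "separated_family G (insert Y P)"
  using assms separated_sym unfolding separated_family_def by blast

lemma separated_family_replace:
  assumes Q: "separated_family G Q" and U: "U \<in> Q" and J: "separated_family G J" and JU: "\<Union>J \<subseteq> U"
  shows "separated_family G ((Q - {U}) \<union> J)"
proof -
  have "separated G Y Z" if "Y \<in> (Q - {U}) \<union> J" "Z \<in> (Q - {U}) \<union> J" "Y \<noteq> Z" for Y Z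
  proof -
    have QU: "separated G Y' U" if "Y' \<in> Q - {U}" for Y'
      using Q U that by (auto simp: separated_family_def)
    consider "Y \<in> J" "Z \<in> J" | "Y \<in> J" "Z \<in> Q - {U}" | "Y \<in> Q - {U}" "Z \<in> J"
      | "Y \<in> Q - {U}" "Z \<in> Q - {U}"
      using \<open>Y \<in> _\<close> \<open>Z \<in> _\<close> by blast
    then show ?thesis
    proof cases
      case 1 then show ?thesis using J \<open>Y \<noteq> Z\<close> by (simp add: separated_family_def)
    next
      case 2
      then have "Y \<subseteq> U" using JU by blast
      then show ?thesis using separated_mono[OF separated_sym[OF QU[OF \<open>Z \<in> Q - {U}\<close>]]] by blast
    next
      case 3
      then have "Z \<subseteq> U" using JU by blast
      then show ?thesis using separated_mono[OF QU[OF \<open>Y \<in> Q - {U}\<close>]] by blast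
    next
      case 4 then show ?thesis using Q \<open>Y \<noteq> Z\<close> by (simp add: separated_family_def)
    qed
  qed
  with Q J show ?thesis by (auto simp: separated_family_def)
qed

lemma profile_insert: "finite P \<Longrightarrow> Y \<notin> P \<Longrightarrow> profile (insert Y P) = add_mset (card Y) (profile P)"
  by (simp add: profile_def)

lemma profile_remove: "finite P \<Longrightarrow> Y \<in> P \<Longrightarrow> profile P = add_mset (card Y) (profile (P - {Y}))"
  by (metis Diff_iff finite_Diff insert_Diff profile_insert singletonI)

lemma profile_empty_iff: "finite J \<Longrightarrow> profile J = {#} \<longleftrightarrow> J = {}"
  by (simp add: profile_def mset_set_empty_iff)

lemma profile_diff: "finite P \<Longrightarrow> J \<subseteq> P \<Longrightarrow> profile (P - J) = profile P - profile J"
  unfolding profile_def by (simp add: mset_set_Diff image_mset_Diff subset_imp_msubset_mset_set)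

lemma profile_mono: "finite P \<Longrightarrow> J \<subseteq> P \<Longrightarrow> profile J \<subseteq># profile P"
  unfolding profile_def by (simp add: image_mset_subseteq_mono subset_imp_msubset_mset_set)

lemma profile_Un: "finite A \<Longrightarrow> finite B \<Longrightarrow> A \<inter> B = {} \<Longrightarrow> profile (A \<union> B) = profile A + profile B"
  unfolding profile_def by (simp add: mset_set_Union)

lemma sum_mset_profile: "sum_mset (profile P) = sum card P"
  by (simp add: profile_def sum_unfold_sum_mset)

lemma count_profile: "finite Q \<Longrightarrow> count (profile Q) b = card {U\<in>Q. card U = b}"
proof (induction Q rule: finite_induct)
  case (insert Y Q)
  have "{U\<in>insert Y Q. card U = b} =
      (if card Y = b then insert Y {U\<in>Q. card U = b} else {U\<in>Q. card U = b})"
    by auto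
  then show ?case using insert by (auto simp: profile_insert)
qed (simp add: profile_def)

lemma card_Union_separated_family:
  assumes "separated_family G P" "finite (fst G)"
  shows "card (\<Union>P) = sum_mset (profile P)"
proof -
  have "card (\<Union>P) = sum card P"
  proof (rule card_Union_disjoint)
    show "pairwise disjnt P"
      using assms by (auto simp: separated_family_def pairwise_def disjnt_def separated_def)
    show "\<And>A. A \<in> P \<Longrightarrow> finite A"
      using assms(1) connected_set_finite[OF assms(2)] by (auto simp: separated_family_def)
  qed
  then show ?thesis by (simp add: sum_mset_profile)
qed

lemma families_empty: "families G {#} = {{}}"
  by (auto simp: families_def separated_family_def profile_def mset_set_empty_iff)

lemma finite_families: "finite (fst G) \<Longrightarrow> finite (families G M)"
  by (rule finite_subset[of _ "Pow (Pow (fst G))"])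
     (auto simp: families_def separated_family_def connected_set_def)

definition piece :: "'a graph \<Rightarrow> 'a set \<Rightarrow> 'a \<Rightarrow> 'a set" where
  "piece G S v = {u\<in>S. (v, u) \<in> (adj_in G S)\<^sup>*}"

definition pieces :: "'a graph \<Rightarrow> 'a set \<Rightarrow> 'a set set" where
  "pieces G S = piece G S ` S"

lemma piece_self: "v \<in> S \<Longrightarrow> v \<in> piece G S v"
  by (simp add: piece_def)

lemma piece_eq:
  assumes "u \<in> piece G S v" shows "piece G S u = piece G S v"
proof -
  have vu: "(v, u) \<in> (adj_in G S)\<^sup>*" using assms by (simp add: piece_def)
  have "(u, x) \<in> (adj_in G S)\<^sup>* \<longleftrightarrow> (v, x) \<in> (adj_in G S)\<^sup>*" for x
    using rtrancl_trans[OF vu] rtrancl_trans[OF adj_in_rtrancl_sym[OF vu]] by blast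
  then show ?thesis by (simp add: piece_def)
qed

lemma rtrancl_adj_in_piece:
  assumes "(v, x) \<in> (adj_in G S)\<^sup>*"
  shows "(v, x) \<in> (adj_in G (piece G S v))\<^sup>*"
  using assms
proof (induction rule: rtrancl_induct)
  case (step y z)
  have "(v, z) \<in> (adj_in G S)\<^sup>*" using step(1,2) by (rule rtrancl_into_rtrancl)
  with step(1,2) have "(y, z) \<in> adj_in G (piece G S v)"
    by (auto simp: adj_in_def piece_def)
  with step.IH show ?case by (rule rtrancl_into_rtrancl)
qed simp

lemma Union_pieces: "\<Union>(pieces G S) = S"
  by (auto simp: pieces_def piece_def)

lemma connected_set_piece:
  assumes "S \<subseteq> fst G" "v \<in> S"
  shows "connected_set G (piece G S v)"
proof -
  have "(x, y) \<in> (adj_in G (piece G S v))\<^sup>*" if "x \<in> piece G S v" "y \<in> piece G S v" for x y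
  proof -
    have "(v, x) \<in> (adj_in G (piece G S v))\<^sup>*" "(v, y) \<in> (adj_in G (piece G S v))\<^sup>*"
      using that rtrancl_adj_in_piece[of v _ G S] by (auto simp: piece_def)
    then show ?thesis using rtrancl_trans[OF adj_in_rtrancl_sym] by metis
  qed
  then show ?thesis using assms piece_self[OF assms(2)] by (auto simp: connected_set_def piece_def)
qed

lemma separated_pieces:
  assumes "piece G S v \<noteq> piece G S w"
  shows "separated G (piece G S v) (piece G S w)"
proof -
  have "piece G S v \<inter> piece G S w = {}"
  proof (rule ccontr)
    assume "piece G S v \<inter> piece G S w \<noteq> {}"
    then obtain u where "u \<in> piece G S v" "u \<in> piece G S w" by blast
    with assms show False using piece_eq[of u G S v] piece_eq[of u G S w] by simp
  qed
  moreover have "{x, y} \<notin> snd G" if "x \<in> piece G S v" "y \<in> piece G S w" for x y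
  proof
    assume "{x, y} \<in> snd G"
    then have "(x, y) \<in> adj_in G S" using that by (simp add: piece_def adj_in_def)
    then have "y \<in> piece G S x" using that by (simp add: piece_def)
    then have "piece G S y = piece G S x" by (rule piece_eq)
    moreover have "piece G S x = piece G S v" "piece G S y = piece G S w"
      using that by (simp_all add: piece_eq)
    ultimately show False using assms by simp
  qed
  ultimately show ?thesis by (simp add: separated_def)
qed

lemma separated_family_pieces:
  assumes "S \<subseteq> fst G" "finite S"
  shows "separated_family G (pieces G S)"
  unfolding separated_family_def
proof (intro conjI ballI impI)
  show "finite (pieces G S)" using assms(2) by (simp add: pieces_def)
  show "connected_set G Y" if "Y \<in> pieces G S" for Y
    using that connected_set_piece[OF assms(1)] by (auto simp: pieces_def)
  show "separated G Y Z" if "Y \<in> pieces G S" "Z \<in> pieces G S" "Y \<noteq> Z" for Y Z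
    using that separated_pieces[of G S] by (auto simp: pieces_def)
qed

lemma pieces_Union:
  assumes P: "separated_family G P" shows "pieces G (\<Union>P) = P"
proof -
  have piece_member: "piece G (\<Union>P) y = Y" if Y: "Y \<in> P" "y \<in> Y" for Y y
  proof
    show "piece G (\<Union>P) y \<subseteq> Y"
    proof
      fix x assume "x \<in> piece G (\<Union>P) y"
      then have "(y, x) \<in> (adj_in G (\<Union>P))\<^sup>*" by (simp add: piece_def)
      then show "x \<in> Y"
      proof (induction rule: rtrancl_induct)
        case (step z x)
        then obtain Z where Z: "Z \<in> P" "x \<in> Z" "{z, x} \<in> snd G" by (auto simp: adj_in_def)
        have "Z = Y"
        proof (rule ccontr)
          assume "Z \<noteq> Y"
          then have "separated G Y Z" using P Z(1) Y(1) by (simp add: separated_family_def)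
          then show False using step.IH Z(2,3) by (simp add: separated_def)
        qed
        with Z(2) show ?case by simp
      qed (rule Y(2))
    qed
    show "Y \<subseteq> piece G (\<Union>P) y"
    proof
      fix x assume "x \<in> Y"
      then have "(y, x) \<in> (adj_in G Y)\<^sup>*"
        using P Y by (simp add: separated_family_def connected_set_def)
      then have "(y, x) \<in> (adj_in G (\<Union>P))\<^sup>*"
        using adj_in_rtrancl_mono[of Y "\<Union>P" y x G] Y(1) by blast
      then show "x \<in> piece G (\<Union>P) y" using \<open>x \<in> Y\<close> Y(1) by (auto simp: piece_def)
    qed
  qed
  show ?thesis
  proof
    show "pieces G (\<Union>P) \<subseteq> P" using piece_member by (auto simp: pieces_def)
    show "P \<subseteq> pieces G (\<Union>P)"
    proof
      fix Y assume "Y \<in> P"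
      then have "Y \<noteq> {}" using P by (simp add: separated_family_def connected_set_def)
      then obtain y where "y \<in> Y" by blast
      then show "Y \<in> pieces G (\<Union>P)"
        using piece_member[OF \<open>Y \<in> P\<close>] \<open>Y \<in> P\<close> unfolding pieces_def by blast
    qed
  qed
qed

lemma card_families:
  assumes "finite (fst G)"
  shows "card (families G M) = card {S. S \<subseteq> fst G \<and> profile (pieces G S) = M}"
proof (rule bij_betw_same_card[symmetric], rule bij_betw_byWitness[where f' = Union])
  show "\<forall>S\<in>{S. S \<subseteq> fst G \<and> profile (pieces G S) = M}. \<Union>(pieces G S) = S"
    by (simp add: Union_pieces)
  show "\<forall>P\<in>families G M. pieces G (\<Union>P) = P"
    by (simp add: families_def pieces_Union)
  show "pieces G ` {S. S \<subseteq> fst G \<and> profile (pieces G S) = M} \<subseteq> families G M"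
  proof
    fix P assume "P \<in> pieces G ` {S. S \<subseteq> fst G \<and> profile (pieces G S) = M}"
    then obtain S where "S \<subseteq> fst G" "profile (pieces G S) = M" "P = pieces G S" by blast
    then show "P \<in> families G M"
      using separated_family_pieces[of S G] finite_subset[OF _ assms] by (simp add: families_def)
  qed
  show "\<Union> ` families G M \<subseteq> {S. S \<subseteq> fst G \<and> profile (pieces G S) = M}"
  proof
    fix S assume "S \<in> \<Union> ` families G M"
    then obtain P where P: "separated_family G P" "profile P = M" "S = \<Union>P"
      by (auto simp: families_def)
    then have "S \<subseteq> fst G" by (auto simp: separated_family_def connected_set_def)
    with P show "S \<in> {S. S \<subseteq> fst G \<and> profile (pieces G S) = M}" by (simp add: pieces_Union)
  qed
qed

lemma card_eq_sum_profile_pieces: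
  assumes "finite (fst G)" "S \<subseteq> fst G"
  shows "card S = sum_mset (profile (pieces G S))"
proof -
  have "finite S" using assms finite_subset by blast
  then show ?thesis
    using card_Union_separated_family[OF separated_family_pieces[OF assms(2)] assms(1)]
    by (simp add: Union_pieces)
qed

section \<open>Induced paths\<close>

definition induced_path :: "'a graph \<Rightarrow> 'a list \<Rightarrow> bool" where
  "induced_path G s \<longleftrightarrow> distinct s \<and> set s \<subseteq> fst G \<and>
     (\<forall>i<length s. \<forall>j<length s. {s!i, s!j} \<in> snd G \<longleftrightarrow> j = Suc i \<or> i = Suc j)"

lemma induced_path_card: "induced_path G s \<Longrightarrow> card (set s) = length s"
  by (simp add: induced_path_def distinct_card)

lemma induced_path_edge: "induced_path G s \<Longrightarrow> Suc i < length s \<Longrightarrow> {s!i, s!Suc i} \<in> snd G"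
  unfolding induced_path_def by auto

lemma induced_path_edgeD:
  "induced_path G s \<Longrightarrow> i < length s \<Longrightarrow> j < length s \<Longrightarrow> {s!i, s!j} \<in> snd G \<Longrightarrow> j = Suc i \<or> i = Suc j"
  unfolding induced_path_def by blast

lemma induced_path_rev:
  assumes "induced_path G s" shows "induced_path G (rev s)"
proof -
  let ?n = "length s"
  have "{rev s!i, rev s!j} \<in> snd G \<longleftrightarrow> j = Suc i \<or> i = Suc j" if "i < ?n" "j < ?n" for i j
  proof -
    have "{rev s!i, rev s!j} \<in> snd G \<longleftrightarrow> ?n - Suc j = Suc (?n - Suc i) \<or> ?n - Suc i = Suc (?n - Suc j)"
      using assms that unfolding induced_path_def by (simp add: rev_nth)
    also have "\<dots> \<longleftrightarrow> j = Suc i \<or> i = Suc j" using that by arith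
    finally show ?thesis .
  qed
  then show ?thesis using assms by (simp add: induced_path_def)
qed

lemma induced_path_singleton: "v \<in> fst G \<Longrightarrow> {v, v} \<notin> snd G \<Longrightarrow> induced_path G [v]"
  by (simp add: induced_path_def)

lemma induced_path_snoc:
  assumes "{w, w} \<notin> snd G"
  shows "induced_path G (s @ [w]) \<longleftrightarrow> induced_path G s \<and> w \<in> fst G \<and> w \<notin> set s \<and>
    (\<forall>i<length s. {s!i, w} \<in> snd G \<longleftrightarrow> Suc i = length s)"
proof -
  have split: "(\<forall>i<Suc n. \<forall>j<Suc n. P i j) \<longleftrightarrow>
      (\<forall>i<n. \<forall>j<n. P i j) \<and> (\<forall>i<n. P i n \<and> P n i) \<and> P n n" for P and n :: nat
    by (auto simp: less_Suc_eq)
  have "(\<forall>i<Suc (length s). \<forall>j<Suc (length s).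
      {(s @ [w])!i, (s @ [w])!j} \<in> snd G \<longleftrightarrow> j = Suc i \<or> i = Suc j) \<longleftrightarrow>
    (\<forall>i<length s. \<forall>j<length s. {s!i, s!j} \<in> snd G \<longleftrightarrow> j = Suc i \<or> i = Suc j) \<and>
    (\<forall>i<length s. {s!i, w} \<in> snd G \<longleftrightarrow> Suc i = length s)"
    unfolding split using assms by (auto simp: nth_append insert_commute)
  then show ?thesis unfolding induced_path_def by auto
qed

lemma connected_set_induced_path:
  assumes "induced_path G s" "s \<noteq> []"
  shows "connected_set G (set s)"
proof -
  have "(s!0, s!i) \<in> (adj_in G (set s))\<^sup>*" if "i < length s" for i
    using that
  proof (induction i)
    case (Suc i)
    then have "(s!i, s!Suc i) \<in> adj_in G (set s)"
      using induced_path_edge[OF assms(1)] by (auto simp: adj_in_def)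
    with Suc show ?case by (meson Suc_lessD rtrancl.rtrancl_into_rtrancl)
  qed simp
  then have "(s!0, x) \<in> (adj_in G (set s))\<^sup>*" if "x \<in> set s" for x
    using that by (metis in_set_conv_nth)
  then have "(x, y) \<in> (adj_in G (set s))\<^sup>*" if "x \<in> set s" "y \<in> set s" for x y
    using that rtrancl_trans[OF adj_in_rtrancl_sym] by metis
  then show ?thesis using assms by (auto simp: connected_set_def induced_path_def)
qed

lemma induced_path_nbr_of_first:
  assumes "induced_path G t" "x \<in> set t" "{t!0, x} \<in> snd G"
  shows "x = t!1"
proof -
  obtain l where "l < length t" "x = t!l" using assms(2) by (auto simp: in_set_conv_nth)
  with assms show ?thesis using induced_path_edgeD[OF assms(1), of 0 l] by (cases t) auto
qed

lemma closing_edge_two_nbrs: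
  assumes s: "induced_path G s" and n: "2 \<le> length s" and w: "w \<notin> set s"
    and first: "{s!0, w} \<in> snd G" and last: "{last s, w} \<in> snd G" and x: "x \<in> insert w (set s)"
  shows "\<exists>y z. y \<in> insert w (set s) \<and> z \<in> insert w (set s) \<and> y \<noteq> z \<and> {y, x} \<in> snd G \<and> {z, x} \<in> snd G"
proof -
  let ?n = "length s" and ?T = "insert w (set s)"
  have last_eq: "last s = s!(?n - 1)" using n last_conv_nth[of s] by fastforce
  have ds: "distinct s" using s by (simp add: induced_path_def)
  show ?thesis
  proof (cases "x = w")
    case True
    have "s \<noteq> []" using n by auto
    then have "s!0 \<noteq> s!(?n - 1)" using nth_eq_iff_index_eq[OF ds, of 0 "?n - 1"] n by simp
    moreover have "s!0 \<in> set s" "s!(?n - 1) \<in> set s" using \<open>s \<noteq> []\<close> by auto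
    ultimately show ?thesis using True first last last_eq
      by (intro exI[of _ "s!0"] exI[of _ "s!(?n - 1)"]) auto
  next
    case False
    then obtain j where j: "j < ?n" "x = s!j" using x False by (auto simp: in_set_conv_nth)
    consider "j = 0" | "Suc j = ?n" "j \<noteq> 0" | "0 < j" "Suc j < ?n" using j by linarith
    then show ?thesis
    proof cases
      case 1
      have "{s!1, s!0} \<in> snd G" using induced_path_edge[OF s, of 0] n by (simp add: insert_commute)
      moreover have "s!1 \<noteq> w" using w n by auto
      ultimately show ?thesis using 1 j first n by (intro exI[of _ "s!1"] exI[of _ w]) (auto simp: insert_commute)
    next
      case 2
      then have "j = ?n - 1" by simp
      with j last_eq have "x = last s" by simp
      have "{s!(j - 1), s!j} \<in> snd G" using induced_path_edge[OF s, of "j - 1"] 2 by simp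
      moreover have "s!(j - 1) \<in> set s" "s!(j - 1) \<noteq> w" using w j by auto
      ultimately show ?thesis using \<open>x = last s\<close> j last
        by (intro exI[of _ "s!(j - 1)"] exI[of _ w]) (auto simp: insert_commute)
    next
      case 3
      have "{s!(j - 1), s!j} \<in> snd G" "{s!Suc j, s!j} \<in> snd G"
        using induced_path_edge[OF s, of "j - 1"] induced_path_edge[OF s, of j] 3
        by (simp_all add: insert_commute)
      moreover have "s!(j - 1) \<noteq> s!Suc j" using ds 3 by (simp add: nth_eq_iff_index_eq)
      moreover have "s!(j - 1) \<in> ?T" "s!Suc j \<in> ?T" using 3 by auto
      ultimately show ?thesis using j by blast
    qed
  qed
qed

definition iso_on :: "'a graph \<Rightarrow> 'a set \<Rightarrow> 'b graph \<Rightarrow> 'b set \<Rightarrow> ('a \<Rightarrow> 'b) \<Rightarrow> bool" where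
  "iso_on G U H W f \<longleftrightarrow> bij_betw f U W \<and> (\<forall>u\<in>U. \<forall>v\<in>U. {u, v} \<in> snd G \<longleftrightarrow> {f u, f v} \<in> snd H)"

lemma iso_on_edge: "iso_on G U H W f \<Longrightarrow> u \<in> U \<Longrightarrow> v \<in> U \<Longrightarrow> {f u, f v} \<in> snd H \<longleftrightarrow> {u, v} \<in> snd G"
  by (simp add: iso_on_def)

lemma iso_on_inv:
  assumes "iso_on G U H W f" shows "iso_on H W G U (the_inv_into U f)"
proof -
  have f: "bij_betw f U W" using assms by (simp add: iso_on_def)
  have g: "bij_betw (the_inv_into U f) W U" using bij_betw_the_inv_into[OF f] .
  have "{u, v} \<in> snd H \<longleftrightarrow> {the_inv_into U f u, the_inv_into U f v} \<in> snd G" if "u \<in> W" "v \<in> W" for u v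
  proof -
    have "f (the_inv_into U f u) = u" "f (the_inv_into U f v) = v"
      using that f by (auto simp: bij_betw_def f_the_inv_into_f)
    moreover have "the_inv_into U f u \<in> U" "the_inv_into U f v \<in> U"
      using g that by (auto simp: bij_betw_def)
    ultimately show ?thesis using iso_on_edge[OF assms] by metis
  qed
  with g show ?thesis by (simp add: iso_on_def)
qed

lemma iso_on_comp:
  assumes "iso_on G U H W f" "iso_on H W K Z g" shows "iso_on G U K Z (g \<circ> f)"
proof -
  have "bij_betw (g \<circ> f) U Z" using assms bij_betw_trans by (auto simp: iso_on_def)
  moreover have "\<forall>u\<in>U. f u \<in> W" using assms by (auto simp: iso_on_def bij_betw_def)
  ultimately show ?thesis using assms unfolding iso_on_def by auto
qed

lemma iso_on_Un:
  assumes f: "iso_on G U1 H W1 f" and g: "iso_on G U2 H W2 g"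
    and U: "separated G U1 U2" and W: "separated H W1 W2"
  shows "iso_on G (U1 \<union> U2) H (W1 \<union> W2) (\<lambda>x. if x \<in> U1 then f x else g x)"
proof -
  let ?h = "\<lambda>x. if x \<in> U1 then f x else g x"
  have bf: "bij_betw f U1 W1" and bg: "bij_betw g U2 W2" using f g by (auto simp: iso_on_def)
  have UU: "U1 \<inter> U2 = {}" and WW: "W1 \<inter> W2 = {}" using U W by (auto simp: separated_def)
  have "bij_betw ?h (U1 \<union> U2) (W1 \<union> W2)"
  proof (rule bij_betw_combine[OF _ _ WW])
    show "bij_betw ?h U1 W1" using bf bij_betw_cong[of U1 ?h f W1] by simp
    have "\<forall>x\<in>U2. ?h x = g x" using UU by auto
    then show "bij_betw ?h U2 W2" using bg bij_betw_cong[of U2 ?h g W2] by simp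
  qed
  moreover have "{u, v} \<in> snd G \<longleftrightarrow> {?h u, ?h v} \<in> snd H" if "u \<in> U1 \<union> U2" "v \<in> U1 \<union> U2" for u v
  proof -
    have fW: "f x \<in> W1" if "x \<in> U1" for x using bf that by (auto simp: bij_betw_def)
    have gW: "g x \<in> W2" if "x \<in> U2" for x using bg that by (auto simp: bij_betw_def)
    have across: "{x, y} \<notin> snd G \<and> {f x, g y} \<notin> snd H" if "x \<in> U1" "y \<in> U2" for x y
      using U W fW[OF that(1)] gW[OF that(2)] that by (simp add: separated_def)
    consider "u \<in> U1" "v \<in> U1" | "u \<in> U1" "v \<notin> U1" | "u \<notin> U1" "v \<in> U1" | "u \<notin> U1" "v \<notin> U1"
      by blast
    then show ?thesis
    proof cases
      case 1 then show ?thesis using iso_on_edge[OF f] by simp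
    next
      case 2 then show ?thesis using across[of u v] that by simp
    next
      case 3 then show ?thesis using across[of v u] that by (simp add: insert_commute)
    next
      case 4 then show ?thesis using iso_on_edge[OF g] that by simp
    qed
  qed
  ultimately show ?thesis by (simp add: iso_on_def)
qed

lemma graph_iso_iff_iso_on: "graph_iso A B \<longleftrightarrow> (\<exists>f. iso_on A (fst A) B (fst B) f)"
  by (simp add: graph_iso_def iso_on_def)

lemma graph_iso_trans: "graph_iso A B \<Longrightarrow> graph_iso B C \<Longrightarrow> graph_iso A C"
  unfolding graph_iso_iff_iso_on using iso_on_comp by metis

lemma graph_iso_induced:
  assumes "iso_on G S H T f" shows "graph_iso (induced G S) (induced H T)"
proof -
  have "\<forall>u\<in>S. f u \<in> T" using assms by (auto simp: iso_on_def bij_betw_def)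
  with assms show ?thesis unfolding graph_iso_def induced_def iso_on_def by (auto intro!: exI[of _ f])
qed

lemma connected_set_image:
  assumes f: "iso_on G U H W f" and "W \<subseteq> fst H" "Z \<subseteq> U" "connected_set G Z"
  shows "connected_set H (f ` Z)"
proof -
  have "(f x, f y) \<in> (adj_in H (f ` Z))\<^sup>*" if "(x, y) \<in> (adj_in G Z)\<^sup>*" for x y
    using that
  proof (induction rule: rtrancl_induct)
    case (step y z)
    then have "y \<in> Z" "z \<in> Z" "{y, z} \<in> snd G" by (auto simp: adj_in_def)
    then have "(f y, f z) \<in> adj_in H (f ` Z)"
      using iso_on_edge[OF f] \<open>Z \<subseteq> U\<close> by (auto simp: adj_in_def)
    with step.IH show ?case by (rule rtrancl_into_rtrancl)
  qed simp
  moreover have "f ` Z \<subseteq> fst H" using f assms(2,3) by (auto simp: iso_on_def bij_betw_def)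
  ultimately show ?thesis using assms(4) by (auto simp: connected_set_def)
qed

lemma separated_image_iff:
  assumes f: "iso_on G U H W f" and "Y \<subseteq> U" "Z \<subseteq> U"
  shows "separated H (f ` Y) (f ` Z) \<longleftrightarrow> separated G Y Z"
proof -
  have "inj_on f U" using f by (simp add: iso_on_def bij_betw_def)
  then have "f ` Y \<inter> f ` Z = {} \<longleftrightarrow> Y \<inter> Z = {}"
    by (simp add: inj_on_image_Int[OF _ assms(2,3), symmetric])
  moreover have "{f x, f y} \<in> snd H \<longleftrightarrow> {x, y} \<in> snd G" if "x \<in> Y" "y \<in> Z" for x y
    using iso_on_edge[OF f] assms(2,3) that by blast
  ultimately show ?thesis by (auto simp: separated_def)
qed

lemma separated_family_image:
  assumes f: "iso_on G U H W f" and W: "W \<subseteq> fst H" and J: "separated_family G J" and JU: "\<Union>J \<subseteq> U"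
  shows "separated_family H ((`) f ` J)" and "profile ((`) f ` J) = profile J"
proof -
  have JU': "Y \<subseteq> U" if "Y \<in> J" for Y using JU that by blast
  show "separated_family H ((`) f ` J)"
    unfolding separated_family_def
  proof (intro conjI ballI impI)
    show "finite ((`) f ` J)" using J by (simp add: separated_family_def)
    show "connected_set H Y'" if "Y' \<in> (`) f ` J" for Y'
      using that J connected_set_image[OF f W JU'] by (auto simp: separated_family_def)
    show "separated H Y' Z'" if YZ: "Y' \<in> (`) f ` J" "Z' \<in> (`) f ` J" "Y' \<noteq> Z'" for Y' Z'
    proof -
      obtain Y Z where "Y \<in> J" "Z \<in> J" "Y' = f ` Y" "Z' = f ` Z" using YZ(1,2) by blast
      moreover have "Y \<noteq> Z" using calculation YZ(3) by blast
      ultimately show ?thesis using J separated_image_iff[OF f JU' JU'] by (simp add: separated_family_def)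
    qed
  qed
  have inj: "inj_on f U" using f by (simp add: iso_on_def bij_betw_def)
  then have injJ: "inj_on ((`) f) J" using inj_on_image_Pow[OF inj] JU' by (meson PowI inj_on_subset subsetI)
  have "profile ((`) f ` J) = image_mset card (image_mset ((`) f) (mset_set J))"
    by (simp add: profile_def image_mset_mset_set[OF injJ])
  also have "\<dots> = profile J"
    unfolding profile_def multiset.map_comp
  proof (rule image_mset_cong)
    fix Y assume "Y \<in># mset_set J"
    then have "Y \<in> J" using J by (simp add: separated_family_def)
    then show "(card \<circ> (`) f) Y = card Y" using inj JU' by (simp add: card_image inj_on_subset)
  qed
  finally show "profile ((`) f ` J) = profile J" .
qed

definition std_path :: "nat \<Rightarrow> nat graph" where
  "std_path b = ({0..<b}, {{i, Suc i} | i. Suc i < b})"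

lemma iso_on_std_path:
  assumes "induced_path G s"
  shows "iso_on (std_path (length s)) {0..<length s} G (set s) (nth s)"
proof -
  have "{u, v} \<in> snd (std_path (length s)) \<longleftrightarrow> v = Suc u \<or> u = Suc v"
    if "u < length s" "v < length s" for u v
    using that unfolding std_path_def by (auto simp: doubleton_eq_iff)
  then show ?thesis
    using assms by (auto simp: iso_on_def induced_path_def intro: bij_betw_nth)
qed

section \<open>Graphs of maximum degree two with long components\<close>

definition nbrs :: "'a graph \<Rightarrow> 'a \<Rightarrow> 'a set" where
  "nbrs G v = {u \<in> fst G. {u, v} \<in> snd G}"

lemma degree_eq_card_nbrs: "degree G v = card (nbrs G v)"
  by (simp add: degree_def nbrs_def)

lemma connected_set_subset_component:
  assumes "connected_set G T" "v \<in> T"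
  shows "T \<subseteq> component G v"
proof
  fix x assume "x \<in> T"
  then have "(v, x) \<in> (adj_in G T)\<^sup>*" using assms by (simp add: connected_set_def)
  moreover have "adj_in G T \<subseteq> adj G" by (auto simp: adj_in_def adj_def)
  ultimately show "x \<in> component G v" by (auto simp: component_def dest: rtrancl_mono)
qed

locale deg2_graph =
  fixes G :: "'a graph" and k :: nat
  assumes simple: "simple_graph G"
    and degree_le_two: "\<And>v. v \<in> fst G \<Longrightarrow> degree G v \<le> 2"
    and long_cycles: "\<And>C. cycle_component G C \<Longrightarrow> k < card C"
    and long_paths: "\<And>C. path_component G C \<Longrightarrow> k - 1 \<le> card C"
begin

lemma finite_vertices: "finite (fst G)"
  using simple by (simp add: simple_graph_def)

lemma edge_vertices: "{u, v} \<in> snd G \<Longrightarrow> u \<in> fst G \<and> v \<in> fst G \<and> u \<noteq> v"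
  using simple unfolding simple_graph_def by (metis doubleton_eq_iff)

lemma no_loop: "{v, v} \<notin> snd G"
  using edge_vertices by blast

lemma mem_nbrs: "u \<in> nbrs G v \<longleftrightarrow> {u, v} \<in> snd G"
  using edge_vertices by (auto simp: nbrs_def)

lemma finite_nbrs: "finite (nbrs G v)"
  using finite_vertices by (simp add: nbrs_def)

lemma nbrs_eq_doubleton:
  assumes "y \<noteq> z" "{y, x} \<in> snd G" "{z, x} \<in> snd G"
  shows "nbrs G x = {y, z}"
proof -
  have "{y, z} \<subseteq> nbrs G x" using assms by (simp add: mem_nbrs)
  moreover have "card (nbrs G x) \<le> card {y, z}"
    using assms degree_le_two[of x] edge_vertices by (simp add: degree_eq_card_nbrs)
  ultimately show ?thesis using card_seteq[OF finite_nbrs] by blast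
qed

lemma nbr_unique:
  assumes "degree G x \<le> 1" "{y, x} \<in> snd G" "{u, x} \<in> snd G"
  shows "u = y"
proof (rule ccontr)
  assume "u \<noteq> y"
  then have "degree G x = 2" using nbrs_eq_doubleton assms(2,3) by (simp add: degree_eq_card_nbrs)
  with assms(1) show False by simp
qed

lemma component_subset_closed:
  assumes "v \<in> T" "\<forall>x\<in>T. nbrs G x \<subseteq> T"
  shows "component G v \<subseteq> T"
proof
  fix u assume "u \<in> component G v"
  then have "(v, u) \<in> (adj G)\<^sup>*" by (simp add: component_def)
  then show "u \<in> T"
  proof (induction rule: rtrancl_induct)
    case (step x u)
    then have "u \<in> nbrs G x" by (simp add: adj_def mem_nbrs insert_commute)
    with step.IH assms(2) show ?case by blast
  qed (rule assms(1))
qed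

lemma card_closed_cycle:
  assumes T: "connected_set G T" and closed: "\<forall>x\<in>T. nbrs G x \<subseteq> T \<and> degree G x = 2"
  shows "k < card T"
proof -
  obtain v where v: "v \<in> T" using T by (auto simp: connected_set_def)
  have "component G v = T"
    using component_subset_closed[OF v] connected_set_subset_component[OF T v] closed by blast
  moreover have "v \<in> fst G" using T v by (auto simp: connected_set_def)
  ultimately have "cycle_component G T" using closed by (auto simp: cycle_component_def components_def)
  then show ?thesis by (rule long_cycles)
qed

lemma card_closed_with_leaf:
  assumes "v \<in> T" "v \<in> fst G" "degree G v \<noteq> 2" "finite T" "\<forall>x\<in>T. nbrs G x \<subseteq> T"
  shows "k - 1 \<le> card T"
proof -
  have "v \<in> component G v" by (simp add: component_def)
  then have "path_component G (component G v)"
    using assms(2,3) by (auto simp: path_component_def components_def)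
  then have "k - 1 \<le> card (component G v)" by (rule long_paths)
  also have "\<dots> \<le> card T" using component_subset_closed assms by (simp add: card_mono)
  finally show ?thesis .
qed

lemma induced_path_interior_nbrs:
  assumes s: "induced_path G s" and i: "0 < i" "Suc i < length s"
  shows "nbrs G (s!i) = {s!(i - 1), s!Suc i}"
proof (rule nbrs_eq_doubleton)
  show "s!(i - 1) \<noteq> s!Suc i"
    using s i by (simp add: induced_path_def nth_eq_iff_index_eq)
  show "{s!(i - 1), s!i} \<in> snd G" using induced_path_edge[OF s, of "i - 1"] i by simp
  show "{s!Suc i, s!i} \<in> snd G" using induced_path_edge[OF s, of i] i by (simp add: insert_commute)
qed

lemma induced_path_exit_at_end:
  assumes s: "induced_path G s" and i: "i < length s" and w: "w \<notin> set s" "{s!i, w} \<in> snd G"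
  shows "i = 0 \<or> Suc i = length s"
proof (rule ccontr)
  assume "\<not> ?thesis"
  then have "w \<in> nbrs G (s!i)" "Suc i < length s" "0 < i"
    using i w(2) by (auto simp: mem_nbrs insert_commute)
  then have "w \<in> {s!(i - 1), s!Suc i}"
    using induced_path_interior_nbrs[OF s] by blast
  then show False using w(1) \<open>Suc i < length s\<close> by auto
qed

lemma induced_path_no_closing_edge:
  assumes s: "induced_path G s" and n: "2 \<le> length s" and w: "w \<notin> set s"
    and first: "{s!0, w} \<in> snd G" and last: "{last s, w} \<in> snd G"
  shows "k \<le> length s"
proof -
  let ?T = "insert w (set s)"
  have "\<exists>y z. y \<in> ?T \<and> z \<in> ?T \<and> y \<noteq> z \<and> {y, x} \<in> snd G \<and> {z, x} \<in> snd G" if "x \<in> ?T" for x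
    by (rule closing_edge_two_nbrs[OF s n w first last that])
  then have "\<forall>x\<in>?T. nbrs G x \<subseteq> ?T \<and> degree G x = 2"
    using nbrs_eq_doubleton by (fastforce simp: degree_eq_card_nbrs)
  moreover have "connected_set G ?T"
  proof -
    have "s \<noteq> []" using n by auto
    then have "\<not> separated G (set s) {w}" using last by (auto simp: separated_def)
    moreover have "w \<in> fst G" using last edge_vertices by blast
    ultimately have "connected_set G (set s \<union> {w})"
      using connected_set_Un[OF connected_set_induced_path[OF s \<open>s \<noteq> []\<close>] connected_set_singleton]
      by blast
    then show ?thesis by simp
  qed
  ultimately have "k < card ?T" using card_closed_cycle by blast
  then show ?thesis using w induced_path_card[OF s] by simp
qed

lemma induced_path_snoc_nbr:
  assumes s: "induced_path G s" and "s \<noteq> []" and w: "w \<notin> set s" "{last s, w} \<in> snd G"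
    and short: "length s < k"
  shows "induced_path G (s @ [w])"
proof -
  have "{s!i, w} \<in> snd G \<longleftrightarrow> Suc i = length s" if i: "i < length s" for i
  proof
    assume e: "{s!i, w} \<in> snd G"
    show "Suc i = length s"
    proof (rule ccontr)
      assume "Suc i \<noteq> length s"
      then have "i = 0" "2 \<le> length s"
        using induced_path_exit_at_end[OF s i w(1) e] i by linarith+
      then show False using induced_path_no_closing_edge[OF s _ w(1) _ w(2)] e short by simp
    qed
  next
    assume "Suc i = length s"
    then have "i = length s - 1" by simp
    with \<open>s \<noteq> []\<close> have "s!i = last s" by (simp add: last_conv_nth)
    then show "{s!i, w} \<in> snd G" using w(2) by simp
  qed
  then show ?thesis using s w edge_vertices induced_path_snoc[OF no_loop] by blast
qed

lemma connected_set_induced_path_exists: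
  assumes X: "connected_set G X" and small: "card X \<le> k"
  shows "\<exists>s. induced_path G s \<and> set s = X"
proof -
  have finX: "finite X" using connected_set_finite[OF finite_vertices X] .
  obtain x0 where x0: "x0 \<in> X" using X by (auto simp: connected_set_def)
  let ?P = "\<lambda>s. induced_path G s \<and> set s \<subseteq> X"
  have "?P [x0]" using x0 X no_loop by (auto simp: connected_set_def intro: induced_path_singleton)
  moreover have "length s < Suc (card X)" if "?P s" for s
    using that induced_path_card card_mono[OF finX] by (metis le_imp_less_Suc)
  ultimately obtain s where s: "induced_path G s" "set s \<subseteq> X"
    and longest: "\<And>t. induced_path G t \<Longrightarrow> set t \<subseteq> X \<Longrightarrow> length t \<le> length s"
    using ex_has_greatest_nat[of ?P "[x0]" length "Suc (card X)"] by blast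
  have ne: "s \<noteq> []" using longest[of "[x0]"] \<open>?P [x0]\<close> by auto
  show ?thesis
  proof (rule ccontr)
    assume "\<nexists>s. induced_path G s \<and> set s = X"
    then obtain z where z: "z \<in> X" "z \<notin> set s" using s by blast
    have s0: "s!0 \<in> set s" using ne by simp
    then have "(s!0, z) \<in> (adj_in G X)\<^sup>*" using X z s(2) by (auto simp: connected_set_def)
    then obtain y w where "(y, w) \<in> adj_in G X" "y \<in> set s" "w \<notin> set s"
      using rtrancl_exit[OF _ s0 z(2)] by blast
    then have y: "y \<in> set s" and w: "w \<in> X" "w \<notin> set s" "{y, w} \<in> snd G"
      by (auto simp: adj_in_def)
    have "card (set s) < card X" using psubset_card_mono[OF finX] s(2) z by blast
    then have short: "length s < k" using induced_path_card[OF s(1)] small by simp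
    have no_end: False if t: "induced_path G t" "set t = set s" "last t = y" for t
    proof -
      have "length t = length s" "t \<noteq> []" using t induced_path_card s(1) ne by (metis, auto)
      then have "induced_path G (t @ [w])"
        using induced_path_snoc_nbr[OF t(1)] t w short ne by auto
      moreover have "set (t @ [w]) \<subseteq> X" using t(2) s(2) w(1) by simp
      ultimately have "length (t @ [w]) \<le> length s" by (rule longest)
      with \<open>length t = length s\<close> show False by simp
    qed
    obtain i where i: "i < length s" "y = s!i" using y by (auto simp: in_set_conv_nth)
    then consider "i = 0" | "Suc i = length s"
      using induced_path_exit_at_end[OF s(1) i(1) w(2)] w(3) by blast
    then show False
    proof cases
      case 1
      then have "last (rev s) = y" using i ne by (simp add: last_rev hd_conv_nth)
      then show False using no_end[OF induced_path_rev[OF s(1)]] by simp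
    next
      case 2
      then have "i = length s - 1" by simp
      with i ne have "last s = y" by (simp add: last_conv_nth)
      then show False using no_end[OF s(1)] by simp
    qed
  qed
qed

lemma induced_path_eqI:
  assumes s: "induced_path G s" and t: "induced_path G t" and len: "length s = length t"
    and first: "0 < length s \<Longrightarrow> s!0 = t!0" and second: "1 < length s \<Longrightarrow> s!1 = t!1"
  shows "s = t"
proof -
  have "t!i = s!i" if "i < length s" for i
    using that
  proof (induction i rule: less_induct)
    case (less i)
    consider "i = 0" | "i = 1" | j where "i = Suc (Suc j)" by (metis One_nat_def not0_implies_Suc)
    then show ?case
    proof cases
      case 3
      have prev: "t!Suc j = s!Suc j" "t!j = s!j" using less 3 by simp_all
      have "{t!i, s!Suc j} \<in> snd G"
        using induced_path_edge[OF t, of "Suc j"] prev less.prems len 3 by (simp add: insert_commute)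
      then have "t!i \<in> nbrs G (s!Suc j)" by (simp add: mem_nbrs)
      then have "t!i \<in> {s!j, s!i}"
        using induced_path_interior_nbrs[OF s, of "Suc j"] less.prems 3 by simp
      moreover have "t!i \<noteq> t!j"
        using t less.prems len 3 by (simp add: induced_path_def nth_eq_iff_index_eq)
      ultimately show ?thesis using prev by auto
    qed (use less.prems first second in auto)
  qed
  then show ?thesis using len by (simp add: nth_equalityI)
qed

lemma induced_path_unique:
  assumes s: "induced_path G s" and t: "induced_path G t" and st: "set s = set t"
  shows "t = s \<or> t = rev s"
proof -
  let ?n = "length s"
  have len: "length t = ?n" using induced_path_card s t st by metis
  show ?thesis
  proof (cases "?n \<le> 1")
    case True
    then show ?thesis using len st by (cases s; cases t) auto
  next
    case False
    have first_nbr: "x = t!1" if "x \<in> set s" "{t!0, x} \<in> snd G" for x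
      using induced_path_nbr_of_first[OF t] st that by blast
    have "0 < length t" "1 < length t" using False len by linarith+
    then have "t!0 \<in> set s" "t!1 \<in> set s" using nth_mem st by metis+
    then obtain j i where j: "j < ?n" "t!0 = s!j" and i: "i < ?n" "t!1 = s!i"
      by (auto simp: in_set_conv_nth)
    have "i = Suc j \<or> j = Suc i"
      using induced_path_edgeD[OF s i(1) j(1)] induced_path_edge[OF t, of 0] False len i j
      by (auto simp: insert_commute)
    consider "j = 0" | "Suc j = ?n" | "0 < j" "Suc j < ?n" using j(1) by linarith
    then show ?thesis
    proof cases
      case 1
      then have "s = t" using induced_path_eqI[OF s t len[symmetric]] i j \<open>i = Suc j \<or> j = Suc i\<close> by auto
      then show ?thesis by simp
    next
      case 2
      then have "j = ?n - 1" by simp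
      have "rev s = t"
      proof (rule induced_path_eqI[OF induced_path_rev[OF s] t])
        show "length (rev s) = length t" using len by simp
        have "s \<noteq> []" using False by auto
        then show "rev s!0 = t!0" using \<open>j = ?n - 1\<close> j rev_nth[of 0 s] by simp
        have "i = ?n - 2" using \<open>j = ?n - 1\<close> i j \<open>i = Suc j \<or> j = Suc i\<close> by linarith
        then show "rev s!1 = t!1" using i rev_nth[of 1 s] False by (simp add: numeral_2_eq_2)
      qed
      then show ?thesis by simp
    next
      case 3
      have "s!(j - 1) = t!1" "s!Suc j = t!1"
        using first_nbr induced_path_edge[OF s, of "j - 1"] induced_path_edge[OF s, of j] 3 j
        by (simp_all add: insert_commute)
      moreover have "s!(j - 1) \<noteq> s!Suc j"
        using s 3 by (simp add: induced_path_def nth_eq_iff_index_eq)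
      ultimately show ?thesis by simp
    qed
  qed
qed

end

section \<open>The deck is determined by the numbers of separated families\<close>

lemma iso_on_small_connected_sets:
  assumes G: "deg2_graph G k" and G': "deg2_graph G' k"
    and Y: "connected_set G Y" and Y': "connected_set G' Y'" and card: "card Y' = card Y" "card Y \<le> k"
  shows "\<exists>g. iso_on G Y G' Y' g"
proof -
  obtain s where s: "induced_path G s" "set s = Y"
    using deg2_graph.connected_set_induced_path_exists[OF G Y card(2)] by blast
  obtain s' where s': "induced_path G' s'" "set s' = Y'"
    using deg2_graph.connected_set_induced_path_exists[OF G' Y'] card by auto
  have "length s' = length s" using induced_path_card s s' card by metis
  then have "iso_on (std_path (length s)) {0..<length s} G' Y' (nth s')"
    using iso_on_std_path[OF s'(1)] s'(2) by simp
  then show ?thesis using iso_on_comp[OF iso_on_inv[OF iso_on_std_path[OF s(1)]]] s(2) by blast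
qed

lemma iso_on_Union_families:
  assumes G: "deg2_graph G k" and G': "deg2_graph G' k"
  shows "separated_family G P \<Longrightarrow> separated_family G' P' \<Longrightarrow> profile P' = profile P \<Longrightarrow>
    \<forall>Y\<in>P. card Y \<le> k \<Longrightarrow> \<exists>f. iso_on G (\<Union>P) G' (\<Union>P') f"
proof (induction P arbitrary: P' rule: infinite_finite_induct)
  case (infinite P)
  then show ?case by (simp add: separated_family_def)
next
  case empty
  then have "P' = {}" using profile_empty_iff[of P'] by (simp add: separated_family_def profile_def)
  then show ?case by (simp add: iso_on_def bij_betw_def)
next
  case (insert Y P)
  have finP': "finite P'" using insert.prems by (simp add: separated_family_def)
  have "card Y \<in># profile P'" using insert by (simp add: profile_insert)
  then obtain Y' where Y': "Y' \<in> P'" "card Y' = card Y" using finP' by (auto simp: profile_def)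
  have profile_rest: "profile (P' - {Y'}) = profile P"
    using profile_remove[OF finP' Y'(1)] insert Y'(2) by (simp add: profile_insert)
  have "separated_family G P" "separated_family G' (P' - {Y'})"
    using insert.prems separated_family_subset by (blast, blast)
  then obtain f where f: "iso_on G (\<Union>P) G' (\<Union>(P' - {Y'})) f"
    using insert.IH[OF _ _ profile_rest] insert.prems(4) by blast
  have "connected_set G Y" "connected_set G' Y'"
    using insert.prems(1,2) Y'(1) by (simp_all add: separated_family_def)
  then obtain g where g: "iso_on G Y G' Y' g"
    using iso_on_small_connected_sets[OF G G'] insert.prems(4) Y'(2) by blast
  have "separated G Y (\<Union>P)"
    using insert.prems insert.hyps by (intro separated_Union_right) (auto simp: separated_family_def)
  moreover have "separated G' Y' (\<Union>(P' - {Y'}))"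
    using insert.prems Y' by (intro separated_Union_right) (auto simp: separated_family_def)
  ultimately have "\<exists>h. iso_on G (Y \<union> \<Union>P) G' (Y' \<union> \<Union>(P' - {Y'})) h"
    using iso_on_Un[OF g f] by blast
  moreover have "Y' \<union> \<Union>(P' - {Y'}) = \<Union>P'" using Y'(1) by blast
  ultimately show ?case by auto
qed

lemma graph_iso_induced_same_profile:
  assumes A: "deg2_graph A k" and B: "deg2_graph B k" and S: "S \<subseteq> fst A" "card S \<le> k"
    and T: "T \<subseteq> fst B" and same: "profile (pieces B T) = profile (pieces A S)"
  shows "graph_iso (induced A S) (induced B T)"
proof -
  have finS: "finite S" and finT: "finite T"
    using S T deg2_graph.finite_vertices[OF A] deg2_graph.finite_vertices[OF B] finite_subset by auto
  have "\<forall>Y\<in>pieces A S. card Y \<le> k"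
    using card_mono[OF finS] Union_pieces[of A S] S(2) by (metis Union_upper order_trans)
  then obtain f where "iso_on A (\<Union>(pieces A S)) B (\<Union>(pieces B T)) f"
    using iso_on_Union_families[OF A B separated_family_pieces[OF S(1) finS]
        separated_family_pieces[OF T finT] same] by blast
  then show ?thesis unfolding Union_pieces by (rule graph_iso_induced)
qed

lemma deck_count_eq_sum_families:
  assumes fin: "finite (fst G)" and "finite Good" and sums: "\<And>M. M \<in> Good \<Longrightarrow> sum_mset M = k"
    and good: "\<And>S. S \<subseteq> fst G \<Longrightarrow> card S = k \<Longrightarrow>
      graph_iso (induced G S) H \<longleftrightarrow> profile (pieces G S) \<in> Good"
  shows "deck_count G k H = (\<Sum>M\<in>Good. card (families G M))"
proof -
  let ?A = "\<lambda>M. {S. S \<subseteq> fst G \<and> profile (pieces G S) = M}"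
  have "S \<in> (\<Union>M\<in>Good. ?A M) \<longleftrightarrow> S \<subseteq> fst G \<and> card S = k \<and> graph_iso (induced G S) H" for S
  proof (cases "S \<subseteq> fst G")
    case True
    then show ?thesis using good[of S] sums card_eq_sum_profile_pieces[OF fin True] by auto
  qed simp
  then have "{S. S \<subseteq> fst G \<and> card S = k \<and> graph_iso (induced G S) H} = (\<Union>M\<in>Good. ?A M)"
    by blast
  then have "deck_count G k H = card (\<Union>M\<in>Good. ?A M)" by (simp add: deck_count_def)
  also have "\<dots> = (\<Sum>M\<in>Good. card (?A M))"
    using assms(2) fin by (intro card_UN_disjoint) auto
  also have "\<dots> = (\<Sum>M\<in>Good. card (families G M))" by (simp add: card_families[OF fin])
  finally show ?thesis .
qed

definition profiles_iso_to :: "'a graph \<Rightarrow> nat \<Rightarrow> nat graph \<Rightarrow> nat multiset set" where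
  "profiles_iso_to G k H =
     (\<lambda>T. profile (pieces G T)) ` {T. T \<subseteq> fst G \<and> card T = k \<and> graph_iso (induced G T) H}"

lemma finite_profiles_iso_to: "finite (fst G) \<Longrightarrow> finite (profiles_iso_to G k H)"
  by (simp add: profiles_iso_to_def)

lemma sum_mset_profiles_iso_to:
  assumes "finite (fst G)" "M \<in> profiles_iso_to G k H"
  shows "sum_mset M = k"
proof -
  obtain T where "T \<subseteq> fst G" "card T = k" "M = profile (pieces G T)"
    using assms(2) by (auto simp: profiles_iso_to_def)
  then show ?thesis using card_eq_sum_profile_pieces[OF assms(1)] by simp
qed

lemma graph_iso_induced_iff_profile:
  assumes A: "deg2_graph A k" and B: "deg2_graph B k" and S: "S \<subseteq> fst A" "card S = k"
  shows "graph_iso (induced A S) H \<longleftrightarrow>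
    profile (pieces A S) \<in> profiles_iso_to A k H \<union> profiles_iso_to B k H"
proof
  assume "graph_iso (induced A S) H"
  then show "profile (pieces A S) \<in> profiles_iso_to A k H \<union> profiles_iso_to B k H"
    using S by (auto simp: profiles_iso_to_def)
next
  assume "profile (pieces A S) \<in> profiles_iso_to A k H \<union> profiles_iso_to B k H"
  then consider T where "T \<subseteq> fst A" "profile (pieces A T) = profile (pieces A S)" "graph_iso (induced A T) H"
    | T where "T \<subseteq> fst B" "profile (pieces B T) = profile (pieces A S)" "graph_iso (induced B T) H"
    by (auto simp: profiles_iso_to_def)
  then show "graph_iso (induced A S) H"
  proof cases
    case 1
    then have "graph_iso (induced A S) (induced A T)"
      using graph_iso_induced_same_profile[OF A A S(1)] S(2) by simp
    then show ?thesis using 1(3) by (rule graph_iso_trans)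
  next
    case 2
    then have "graph_iso (induced A S) (induced B T)"
      using graph_iso_induced_same_profile[OF A B S(1)] S(2) by simp
    then show ?thesis using 2(3) by (rule graph_iso_trans)
  qed
qed

lemma same_deck_if_card_families_eq:
  assumes G: "deg2_graph G k" and G': "deg2_graph G' k"
    and eq: "\<And>M. sum_mset M = k \<Longrightarrow> card (families G M) = card (families G' M)"
  shows "same_deck k G G'"
  unfolding same_deck_def
proof
  fix H :: "nat graph"
  let ?Good = "profiles_iso_to G k H \<union> profiles_iso_to G' k H"
  have fin: "finite (fst G)" "finite (fst G')"
    using deg2_graph.finite_vertices G G' by blast+
  then have finite: "finite ?Good" by (simp add: finite_profiles_iso_to)
  have sums: "sum_mset M = k" if "M \<in> ?Good" for M
    using that sum_mset_profiles_iso_to[OF fin(1)] sum_mset_profiles_iso_to[OF fin(2)] by blast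
  have "deck_count G k H = (\<Sum>M\<in>?Good. card (families G M))"
    by (rule deck_count_eq_sum_families[OF fin(1) finite sums graph_iso_induced_iff_profile[OF G G']])
  also have "\<dots> = (\<Sum>M\<in>?Good. card (families G' M))"
    using eq sums by (intro sum.cong) simp_all
  also have "\<dots> = deck_count G' k H"
  proof -
    have good': "graph_iso (induced G' S) H \<longleftrightarrow> profile (pieces G' S) \<in> ?Good"
      if "S \<subseteq> fst G'" "card S = k" for S
      using graph_iso_induced_iff_profile[OF G' G that] by (simp add: Un_commute)
    have "deck_count G' k H = (\<Sum>M\<in>?Good. card (families G' M))"
      by (rule deck_count_eq_sum_families[OF fin(2) finite sums good'])
    then show ?thesis by simp
  qed
  finally show "deck_count G k H = deck_count G' k H" .
qed

section \<open>A recursion for the numbers of separated families\<close>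

definition connected_sets :: "'a graph \<Rightarrow> nat \<Rightarrow> 'a set set" where
  "connected_sets G a = {X. connected_set G X \<and> card X = a}"

definition touched :: "'a graph \<Rightarrow> 'a set set \<Rightarrow> 'a set \<Rightarrow> 'a set set" where
  "touched G P X = {Y \<in> P. \<not> separated G X Y}"

text \<open>What a touching pair contributes after merging \<open>X\<close> with the members \<open>J\<close> it touches into \<open>U\<close>.\<close>

definition touching_covers :: "'a graph \<Rightarrow> nat multiset \<Rightarrow> nat \<Rightarrow> 'a set \<Rightarrow> ('a set set \<times> 'a set) set" where
  "touching_covers G N a U = {(J, X). separated_family G J \<and> profile J = N \<and> connected_set G X \<and>
     card X = a \<and> (\<forall>Y\<in>J. \<not> separated G X Y) \<and> X \<union> \<Union>J = U}"

text \<open>Every merged set \<open>U\<close> induces a path, so only its size \<open>b\<close> matters.\<close>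

definition path_covers :: "nat multiset \<Rightarrow> nat \<Rightarrow> nat \<Rightarrow> nat" where
  "path_covers N a b = card (touching_covers (std_path b) N a {0..<b})"

lemma finite_connected_sets: "finite (fst G) \<Longrightarrow> finite (connected_sets G a)"
  by (rule finite_subset[of _ "Pow (fst G)"]) (auto simp: connected_sets_def connected_set_def)

lemma finite_touching_covers: "finite U \<Longrightarrow> finite (touching_covers G N a U)"
  by (rule finite_subset[of _ "Pow (Pow U) \<times> Pow U"]) (auto simp: touching_covers_def)

lemma card_touching_covers_le:
  assumes f: "iso_on G U H W f" and W: "W \<subseteq> fst H" "finite W"
  shows "card (touching_covers G N a U) \<le> card (touching_covers H N a W)"
proof -
  let ?F = "\<lambda>(J, X). ((`) f ` J, f ` X)"
  have inj: "inj_on f U" using f by (simp add: iso_on_def bij_betw_def)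
  have "inj_on ?F (Pow (Pow U) \<times> Pow U)"
    using inj_on_image_Pow[OF inj] inj_on_image_Pow[OF inj_on_image_Pow[OF inj]]
    unfolding inj_on_def by auto
  then have "inj_on ?F (touching_covers G N a U)"
    by (rule inj_on_subset) (auto simp: touching_covers_def)
  moreover have "?F ` touching_covers G N a U \<subseteq> touching_covers H N a W"
  proof
    fix p assume "p \<in> ?F ` touching_covers G N a U"
    then obtain J X where JX: "(J, X) \<in> touching_covers G N a U" and p: "p = ((`) f ` J, f ` X)"
      by auto
    have J: "separated_family G J" "profile J = N" and X: "connected_set G X" "card X = a"
      and touch: "\<forall>Y\<in>J. \<not> separated G X Y" and U: "X \<union> \<Union>J = U"
      using JX by (auto simp: touching_covers_def)
    have XU: "X \<subseteq> U" and JU: "\<Union>J \<subseteq> U" using U by auto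
    have "separated_family H ((`) f ` J)" "profile ((`) f ` J) = N"
      using separated_family_image[OF f W(1) J(1) JU] J(2) by simp_all
    moreover have "connected_set H (f ` X)" "card (f ` X) = a"
      using connected_set_image[OF f W(1) XU X(1)] card_image[OF inj_on_subset[OF inj XU]] X(2)
      by simp_all
    moreover have "\<not> separated H (f ` X) Y'" if Y': "Y' \<in> (`) f ` J" for Y'
    proof -
      obtain Y where "Y \<in> J" "Y' = f ` Y" using Y' by blast
      then have "Y \<subseteq> U" using JU by blast
      then show ?thesis using touch separated_image_iff[OF f XU] \<open>Y \<in> J\<close> \<open>Y' = f ` Y\<close> by simp
    qed
    moreover have "f ` X \<union> \<Union>((`) f ` J) = W"
      using f U by (auto simp: iso_on_def bij_betw_def)
    ultimately show "p \<in> touching_covers H N a W" using p by (simp add: touching_covers_def)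
  qed
  ultimately show ?thesis by (rule card_inj_on_le[OF _ _ finite_touching_covers[OF W(2)]])
qed

lemma card_touching_covers_iso:
  assumes "iso_on G U H W f" "U \<subseteq> fst G" "W \<subseteq> fst H" "finite U" "finite W"
  shows "card (touching_covers G N a U) = card (touching_covers H N a W)"
  by (intro antisym card_touching_covers_le[OF assms(1,3,5)]
      card_touching_covers_le[OF iso_on_inv[OF assms(1)] assms(2,4)])

lemma (in deg2_graph) card_touching_covers_path:
  assumes "induced_path G s"
  shows "card (touching_covers G N a (set s)) = path_covers N a (length s)"
  using card_touching_covers_iso[OF iso_on_std_path[OF assms]] assms
  by (simp add: path_covers_def std_path_def induced_path_def)

lemma card_untouched_pairs:
  assumes fin: "finite (fst G)"
  shows "card {(P, X). P \<in> families G M \<and> X \<in> connected_sets G a \<and> touched G P X = {}} =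
    card (families G (add_mset a M)) * count (add_mset a M) a"
proof -
  let ?S = "{(P, X). P \<in> families G M \<and> X \<in> connected_sets G a \<and> touched G P X = {}}"
  let ?T = "Sigma (families G (add_mset a M)) (\<lambda>Q. {X \<in> Q. card X = a})"
  have "bij_betw (\<lambda>(P, X). (insert X P, X)) ?S ?T"
  proof (rule bij_betw_byWitness[where f' = "\<lambda>(Q, X). (Q - {X}, X)"])
    show "\<forall>p\<in>?S. (\<lambda>(Q, X). (Q - {X}, X)) ((\<lambda>(P, X). (insert X P, X)) p) = p"
    proof
      fix p assume "p \<in> ?S"
      then obtain P X where p: "p = (P, X)" "connected_set G X" "touched G P X = {}"
        by (auto simp: connected_sets_def)
      then have "X \<notin> P" using connected_set_not_separated_self[of G X] by (auto simp: touched_def)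
      with p show "(\<lambda>(Q, X). (Q - {X}, X)) ((\<lambda>(P, X). (insert X P, X)) p) = p" by simp
    qed
    show "\<forall>q\<in>?T. (\<lambda>(P, X). (insert X P, X)) ((\<lambda>(Q, X). (Q - {X}, X)) q) = q" by auto
    show "(\<lambda>(P, X). (insert X P, X)) ` ?S \<subseteq> ?T"
    proof
      fix q assume "q \<in> (\<lambda>(P, X). (insert X P, X)) ` ?S"
      then obtain P X where q: "q = (insert X P, X)" and P: "separated_family G P" "profile P = M"
        and X: "connected_set G X" "card X = a" and sep: "\<forall>Y\<in>P. separated G X Y"
        by (auto simp: families_def connected_sets_def touched_def)
      have "X \<notin> P" using sep connected_set_not_separated_self[OF X(1)] by blast
      then have "profile (insert X P) = add_mset a M"
        using P X(2) profile_insert[of P X] by (simp add: separated_family_def)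
      moreover have "separated_family G (insert X P)" using separated_family_insert[OF P(1) X(1)] sep by blast
      ultimately show "q \<in> ?T" using q X(2) by (simp add: families_def)
    qed
    show "(\<lambda>(Q, X). (Q - {X}, X)) ` ?T \<subseteq> ?S"
    proof
      fix p assume "p \<in> (\<lambda>(Q, X). (Q - {X}, X)) ` ?T"
      then obtain Q X where p: "p = (Q - {X}, X)" and Q: "separated_family G Q" "profile Q = add_mset a M"
        and X: "X \<in> Q" "card X = a"
        by (auto simp: families_def)
      have "separated_family G (Q - {X})" using separated_family_subset[OF Q(1)] by blast
      moreover have "profile (Q - {X}) = M"
        using profile_remove[OF _ X(1)] Q X(2) by (simp add: separated_family_def)
      moreover have "X \<in> connected_sets G a" using Q(1) X by (simp add: separated_family_def connected_sets_def)
      moreover have "touched G (Q - {X}) X = {}" using Q(1) X(1) by (auto simp: separated_family_def touched_def)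
      ultimately show "p \<in> ?S" using p by (simp add: families_def)
    qed
  qed
  then have "card ?S = card ?T" by (rule bij_betw_same_card)
  also have "\<dots> = (\<Sum>Q\<in>families G (add_mset a M). card {X \<in> Q. card X = a})"
    using finite_families[OF fin] by (intro card_SigmaI) (auto simp: families_def separated_family_def)
  also have "\<dots> = (\<Sum>Q\<in>families G (add_mset a M). count (add_mset a M) a)"
    by (intro sum.cong refl) (auto simp: families_def separated_family_def count_profile[symmetric])
  finally show ?thesis by simp
qed

definition touching_pairs :: "'a graph \<Rightarrow> nat multiset \<Rightarrow> nat \<Rightarrow> ('a set set \<times> 'a set) set" where
  "touching_pairs G M a = {(P, X). P \<in> families G M \<and> X \<in> connected_sets G a \<and> touched G P X \<noteq> {}}"

lemma card_families_times_connected_sets: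
  assumes fin: "finite (fst G)"
  shows "card (families G M) * card (connected_sets G a) =
    card (families G (add_mset a M)) * count (add_mset a M) a + card (touching_pairs G M a)"
proof -
  let ?S = "{(P, X). P \<in> families G M \<and> X \<in> connected_sets G a \<and> touched G P X = {}}"
  have "families G M \<times> connected_sets G a = ?S \<union> touching_pairs G M a"
    by (auto simp: touching_pairs_def)
  moreover have "finite (families G M \<times> connected_sets G a)"
    using finite_families[OF fin] finite_connected_sets[OF fin] by simp
  ultimately have "card (families G M \<times> connected_sets G a) = card ?S + card (touching_pairs G M a)"
    by (subst card_Un_disjoint[symmetric]) (auto simp: touching_pairs_def)
  then show ?thesis using card_untouched_pairs[OF fin] by (simp add: card_cartesian_product)
qed

lemma connected_set_merge_touched:
  assumes "separated_family G P" "connected_set G X"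
  shows "connected_set G (X \<union> \<Union>(touched G P X))"
proof (rule connected_set_Union[OF _ assms(2)])
  show "finite (touched G P X)" using assms(1) by (simp add: touched_def separated_family_def)
  show "\<forall>Y\<in>touched G P X. connected_set G Y \<and> \<not> separated G X Y"
    using assms(1) by (simp add: touched_def separated_family_def)
qed

lemma separated_merge_untouched:
  assumes P: "separated_family G P" and Z: "Z \<in> P - touched G P X"
  shows "separated G (X \<union> \<Union>(touched G P X)) Z"
proof (rule separated_Un_left)
  show "separated G X Z" using Z by (simp add: touched_def)
  show "separated G (\<Union>(touched G P X)) Z"
  proof (rule separated_Union_left)
    fix Y assume "Y \<in> touched G P X"
    then have "Y \<in> P" "Y \<noteq> Z" using Z by (auto simp: touched_def)
    then show "separated G Y Z" using P Z by (simp add: separated_family_def)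
  qed
qed

lemma merge_touched:
  assumes P: "separated_family G P" and X: "connected_set G X"
  shows "separated_family G (insert (X \<union> \<Union>(touched G P X)) (P - touched G P X))"
    and "X \<union> \<Union>(touched G P X) \<notin> P - touched G P X"
proof -
  have U: "connected_set G (X \<union> \<Union>(touched G P X))" by (rule connected_set_merge_touched[OF P X])
  have sep: "separated G (X \<union> \<Union>(touched G P X)) Z" if "Z \<in> P - touched G P X" for Z
    by (rule separated_merge_untouched[OF P that])
  show "separated_family G (insert (X \<union> \<Union>(touched G P X)) (P - touched G P X))"
    using separated_family_insert[OF separated_family_subset[OF P] U] sep by blast
  show "X \<union> \<Union>(touched G P X) \<notin> P - touched G P X"
    using sep connected_set_not_separated_self[OF U] by blast
qed

lemma split_cover:
  assumes Q: "separated_family G Q" "U \<in> Q" and cover: "(J, X) \<in> touching_covers G N a U"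
  shows "separated_family G ((Q - {U}) \<union> J)" and "touched G ((Q - {U}) \<union> J) X = J"
    and "(Q - {U}) \<inter> J = {}"
proof -
  have J: "separated_family G J" and XU: "X \<union> \<Union>J = U" and touch: "\<forall>Y\<in>J. \<not> separated G X Y"
    using cover by (auto simp: touching_covers_def)
  show "separated_family G ((Q - {U}) \<union> J)"
    using separated_family_replace[OF Q J] XU by blast
  have sep: "separated G X Y" if "Y \<in> Q - {U}" for Y
  proof -
    have "separated G U Y" using Q that by (auto simp: separated_family_def)
    then show ?thesis using separated_mono XU by blast
  qed
  then show "touched G ((Q - {U}) \<union> J) X = J" using touch by (auto simp: touched_def)
  show "(Q - {U}) \<inter> J = {}" using sep touch by blast
qed

lemma card_touching_pairs_of_type:
  assumes N: "N \<subseteq># M" "N \<noteq> {#}"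
  shows "card {(P, X). P \<in> families G M \<and> X \<in> connected_sets G a \<and>
        profile (touched G P X) = N \<and> card (X \<union> \<Union>(touched G P X)) = b} =
    card (Sigma (Sigma (families G (add_mset b (M - N))) (\<lambda>Q. {U \<in> Q. card U = b}))
      (\<lambda>(Q, U). touching_covers G N a U))"
    (is "card ?L = card ?R")
proof (rule bij_betw_same_card)
  let ?U = "\<lambda>P X. X \<union> \<Union>(touched G P X)"
  let ?merge = "\<lambda>(P, X). ((insert (?U P X) (P - touched G P X), ?U P X), (touched G P X, X))"
  let ?split = "\<lambda>((Q, U), (J, X)). ((Q - {U}) \<union> J, X)"
  show "bij_betw ?merge ?L ?R"
  proof (rule bij_betw_byWitness[where f' = ?split])
    show "\<forall>p\<in>?L. ?split (?merge p) = p"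
    proof
      fix p assume "p \<in> ?L"
      then obtain P X where p: "p = (P, X)" "separated_family G P" "connected_set G X"
        by (auto simp: families_def connected_sets_def)
      have "touched G P X \<subseteq> P" by (auto simp: touched_def)
      then show "?split (?merge p) = p" using merge_touched(2)[OF p(2,3)] p(1) by auto
    qed
    show "\<forall>w\<in>?R. ?merge (?split w) = w"
    proof
      fix w assume "w \<in> ?R"
      then obtain Q U J X where w: "w = ((Q, U), (J, X))" "separated_family G Q" "U \<in> Q"
        and cover: "(J, X) \<in> touching_covers G N a U"
        by (auto simp: families_def)
      have "X \<union> \<Union>J = U" using cover by (simp add: touching_covers_def)
      then show "?merge (?split w) = w" using split_cover[OF w(2,3) cover] w(1,3) by auto
    qed
    show "?merge ` ?L \<subseteq> ?R"
    proof
      fix q assume "q \<in> ?merge ` ?L"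
      then obtain P X where q: "q = ?merge (P, X)" and P: "separated_family G P" "profile P = M"
        and X: "connected_set G X" "card X = a" and J: "profile (touched G P X) = N"
        and U: "card (?U P X) = b"
        by (auto simp: families_def connected_sets_def)
      have JP: "touched G P X \<subseteq> P" by (auto simp: touched_def)
      have finP: "finite P" using P(1) by (simp add: separated_family_def)
      have "profile (insert (?U P X) (P - touched G P X)) = add_mset b (profile (P - touched G P X))"
        using merge_touched(2)[OF P(1) X(1)] profile_insert[of "P - touched G P X" "?U P X"] finP U by simp
      also have "\<dots> = add_mset b (M - N)" using profile_diff[OF finP JP] P(2) J by simp
      finally have "profile (insert (?U P X) (P - touched G P X)) = add_mset b (M - N)" .
      moreover have "(touched G P X, X) \<in> touching_covers G N a (?U P X)"
        using separated_family_subset[OF P(1) JP] J X by (auto simp: touching_covers_def touched_def)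
      ultimately show "q \<in> ?R" using q merge_touched(1)[OF P(1) X(1)] U by (simp add: families_def)
    qed
    show "?split ` ?R \<subseteq> ?L"
    proof
      fix p assume "p \<in> ?split ` ?R"
      then obtain Q U J X where p: "p = ((Q - {U}) \<union> J, X)"
        and Q: "separated_family G Q" "profile Q = add_mset b (M - N)" "U \<in> Q" "card U = b"
        and cover: "(J, X) \<in> touching_covers G N a U"
        by (auto simp: families_def)
      have J: "profile J = N" "finite J" and X: "connected_set G X" "card X = a" and XU: "X \<union> \<Union>J = U"
        using cover by (auto simp: touching_covers_def separated_family_def)
      have finQ: "finite Q" using Q(1) by (simp add: separated_family_def)
      have "profile ((Q - {U}) \<union> J) = profile (Q - {U}) + profile J"
        using profile_Un[OF _ J(2) split_cover(3)[OF Q(1,3) cover]] finQ by simp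
      also have "\<dots> = (M - N) + N" using profile_remove[OF finQ Q(3)] Q(2,4) J(1) by simp
      also have "\<dots> = M" using N(1) by (rule subset_mset.diff_add)
      finally show "p \<in> ?L"
        using p split_cover(1,2)[OF Q(1,3) cover] J(1) X XU Q(4)
        by (simp add: families_def connected_sets_def)
    qed
  qed
qed

lemma finite_submultisets: "finite {N. N \<subseteq># M}"
proof (rule finite_subset)
  show "{N. N \<subseteq># M} \<subseteq> mset ` {xs. set xs \<subseteq> set_mset M \<and> length xs \<le> size M}"
  proof
    fix N assume "N \<in> {N. N \<subseteq># M}"
    moreover obtain xs where "mset xs = N" using ex_mset by blast
    ultimately show "N \<in> mset ` {xs. set xs \<subseteq> set_mset M \<and> length xs \<le> size M}"
      using set_mset_mono size_mset_mono by fastforce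
  qed
  show "finite (mset ` {xs. set xs \<subseteq> set_mset M \<and> length xs \<le> size M})"
    using finite_lists_length_le[of "set_mset M"] by simp
qed

lemma (in deg2_graph) card_covers_in_families:
  assumes "b \<le> k"
  shows "card (Sigma (Sigma (families G M) (\<lambda>Q. {U \<in> Q. card U = b})) (\<lambda>(Q, U). touching_covers G N a U)) =
    card (families G M) * count M b * path_covers N a b"
proof -
  let ?S = "Sigma (families G M) (\<lambda>Q. {U \<in> Q. card U = b})"
  have members: "separated_family G Q" "profile Q = M" "U \<in> Q" "card U = b" if "(Q, U) \<in> ?S" for Q U
    using that by (auto simp: families_def)
  have finS: "finite ?S"
    using finite_families[OF finite_vertices] by (intro finite_SigmaI) (auto simp: families_def separated_family_def)
  have cover_count: "card (touching_covers G N a U) = path_covers N a b" if QU: "(Q, U) \<in> ?S" for Q U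
  proof -
    have U: "connected_set G U" using members[OF QU] by (simp add: separated_family_def)
    moreover have "card U \<le> k" using members(4)[OF QU] assms by simp
    ultimately obtain s where s: "induced_path G s" "set s = U"
      using connected_set_induced_path_exists by blast
    then have "length s = b" using induced_path_card[OF s(1)] members(4)[OF QU] by simp
    then show ?thesis using card_touching_covers_path[OF s(1)] s(2) by simp
  qed
  let ?B = "\<lambda>(Q, U). touching_covers G N a U"
  have "finite (?B p)" if p: "p \<in> ?S" for p
  proof -
    obtain Q U where QU: "p = (Q, U)" by (cases p)
    then have "(Q, U) \<in> ?S" using p by simp
    then have "separated_family G Q" "U \<in> Q" by (rule members(1), rule members(3))
    then have "connected_set G U" by (simp add: separated_family_def)
    then have "finite U" by (rule connected_set_finite[OF finite_vertices])
    then show ?thesis using finite_touching_covers QU by simp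
  qed
  then have "card (Sigma ?S ?B) = (\<Sum>p\<in>?S. card (?B p))"
    using card_SigmaI[OF finS] by blast
  also have "\<dots> = (\<Sum>p\<in>?S. path_covers N a b)"
  proof (rule sum.cong[OF refl])
    fix p assume p: "p \<in> ?S"
    obtain Q U where QU: "p = (Q, U)" by (cases p)
    then show "card (?B p) = path_covers N a b" using cover_count p by simp
  qed
  also have "\<dots> = card ?S * path_covers N a b" by simp
  also have "card ?S = (\<Sum>Q\<in>families G M. card {U \<in> Q. card U = b})"
    using finite_families[OF finite_vertices] by (intro card_SigmaI) (auto simp: families_def separated_family_def)
  also have "\<dots> = card (families G M) * count M b"
    by (simp add: families_def separated_family_def count_profile[symmetric])
  finally show ?thesis .
qed

lemma touching_pair_type:
  assumes "(P, X) \<in> touching_pairs G M a"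
  shows "profile (touched G P X) \<subseteq># M" and "profile (touched G P X) \<noteq> {#}"
    and "card (X \<union> \<Union>(touched G P X)) \<le> a + sum_mset (profile (touched G P X))"
proof -
  have P: "separated_family G P" "profile P = M" and X: "connected_set G X" "card X = a"
    and touched: "touched G P X \<noteq> {}"
    using assms by (auto simp: touching_pairs_def families_def connected_sets_def)
  have JP: "touched G P X \<subseteq> P" by (auto simp: touched_def)
  have finP: "finite P" using P(1) by (simp add: separated_family_def)
  show "profile (touched G P X) \<subseteq># M" using profile_mono[OF finP JP] P(2) by simp
  show "profile (touched G P X) \<noteq> {#}"
    using touched profile_empty_iff finite_subset[OF JP finP] by blast
  have "card (X \<union> \<Union>(touched G P X)) \<le> card X + card (\<Union>(touched G P X))" by (rule card_Un_le)
  also have "card (\<Union>(touched G P X)) \<le> sum card (touched G P X)" by (rule card_Union_le_sum_card)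
  finally show "card (X \<union> \<Union>(touched G P X)) \<le> a + sum_mset (profile (touched G P X))"
    using X(2) by (simp add: sum_mset_profile)
qed

lemma (in deg2_graph) card_touching_pairs:
  assumes small: "sum_mset M + a \<le> k"
  shows "card (touching_pairs G M a) = (\<Sum>N\<in>{N. N \<subseteq># M \<and> N \<noteq> {#}}. \<Sum>b\<le>a + sum_mset N.
      card (families G (add_mset b (M - N))) * count (add_mset b (M - N)) b * path_covers N a b)"
proof -
  let ?types = "Sigma {N. N \<subseteq># M \<and> N \<noteq> {#}} (\<lambda>N. {..a + sum_mset N})"
  let ?of_type = "\<lambda>N b. {(P, X). P \<in> families G M \<and> X \<in> connected_sets G a \<and>
      profile (touched G P X) = N \<and> card (X \<union> \<Union>(touched G P X)) = b}"
  have fin_types: "finite {N. N \<subseteq># M \<and> N \<noteq> {#}}"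
    using finite_submultisets[of M] by (rule finite_subset[rotated]) blast
  have type: "(profile (touched G P X), card (X \<union> \<Union>(touched G P X))) \<in> ?types"
    if "(P, X) \<in> touching_pairs G M a" for P X
    using touching_pair_type[OF that] by simp
  let ?A = "\<lambda>t. ?of_type (fst t) (snd t)"
  have "touching_pairs G M a = (\<Union>t\<in>?types. ?A t)"
  proof
    show "touching_pairs G M a \<subseteq> (\<Union>t\<in>?types. ?A t)"
    proof
      fix p assume p: "p \<in> touching_pairs G M a"
      obtain P X where PX: "p = (P, X)" by (cases p)
      then show "p \<in> (\<Union>t\<in>?types. ?A t)"
        using p type[of P X] by (auto simp: touching_pairs_def)
    qed
    show "(\<Union>t\<in>?types. ?A t) \<subseteq> touching_pairs G M a"
      by (auto simp: touching_pairs_def profile_def)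
  qed
  then have "card (touching_pairs G M a) = (\<Sum>t\<in>?types. card (?A t))"
  proof (simp only:, intro card_UN_disjoint)
    show "finite ?types" using fin_types by blast
    show "\<forall>t\<in>?types. finite (?A t)"
      using finite_families[OF finite_vertices] finite_connected_sets[OF finite_vertices]
      by (auto intro: finite_subset[of _ "families G M \<times> connected_sets G a"])
    show "\<forall>t\<in>?types. \<forall>t'\<in>?types. t \<noteq> t' \<longrightarrow> ?A t \<inter> ?A t' = {}"
      by (auto simp: prod_eq_iff)
  qed
  also have "\<dots> = (\<Sum>N\<in>{N. N \<subseteq># M \<and> N \<noteq> {#}}. \<Sum>b\<le>a + sum_mset N. card (?of_type N b))"
    using sum.Sigma[OF fin_types, of "\<lambda>N. {..a + sum_mset N}" "\<lambda>N b. card (?of_type N b)"]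
    by (simp add: split_def)
  also have "\<dots> = (\<Sum>N\<in>{N. N \<subseteq># M \<and> N \<noteq> {#}}. \<Sum>b\<le>a + sum_mset N.
      card (families G (add_mset b (M - N))) * count (add_mset b (M - N)) b * path_covers N a b)"
  proof (intro sum.cong refl)
    fix N b assume N: "N \<in> {N. N \<subseteq># M \<and> N \<noteq> {#}}" and b: "b \<in> {..a + sum_mset N}"
    have "sum_mset N \<le> sum_mset M" using N by (auto simp: subset_mset.le_iff_add)
    then have "b \<le> k" using b small by simp
    then show "card (?of_type N b) =
      card (families G (add_mset b (M - N))) * count (add_mset b (M - N)) b * path_covers N a b"
      using card_touching_pairs_of_type[of N M G a b] card_covers_in_families N by simp
  qed
  finally show ?thesis .
qed

section \<open>Counting connected sets\<close>

definition induced_paths :: "'a graph \<Rightarrow> nat \<Rightarrow> 'a list set" where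
  "induced_paths G c = {s. induced_path G s \<and> length s = c}"

definition leaves :: "'a graph \<Rightarrow> 'a set" where
  "leaves G = {v \<in> fst G. degree G v = 1}"

lemma finite_induced_paths: "finite (fst G) \<Longrightarrow> finite (induced_paths G c)"
  by (rule finite_subset[of _ "{s. set s \<subseteq> fst G \<and> length s = c}"])
     (auto simp: induced_paths_def induced_path_def intro: finite_lists_length_eq)

lemma card_connected_sets_0:
  assumes "finite (fst G)" shows "card (connected_sets G 0) = 0"
proof -
  have "connected_sets G 0 = {}"
    using assms by (auto simp: connected_sets_def connected_set_def card_eq_0_iff dest: finite_subset)
  then show ?thesis by simp
qed

lemma card_connected_sets_1: "card (connected_sets G 1) = card (fst G)"
proof -
  have "connected_sets G 1 = (\<lambda>v. {v}) ` fst G"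
    by (auto simp: connected_sets_def connected_set_def card_Suc_eq)
  then show ?thesis by (simp add: card_image)
qed

context deg2_graph
begin

lemma card_connected_sets_2: "card (connected_sets G 2) = card (snd G)"
proof -
  have "connected_sets G 2 = snd G"
  proof
    show "connected_sets G 2 \<subseteq> snd G"
    proof
      fix X assume "X \<in> connected_sets G 2"
      then have X: "connected_set G X" "card X = 2" by (auto simp: connected_sets_def)
      then obtain u v where uv: "X = {u, v}" "u \<noteq> v" by (meson card_2_iff)
      have "(u, v) \<in> (adj_in G X)\<^sup>*" using X(1) uv by (auto simp: connected_set_def)
      then obtain y w where "(y, w) \<in> adj_in G X" "y \<in> {u}" "w \<notin> {u}"
        using rtrancl_exit[of u v "adj_in G X" "{u}"] uv by blast
      then show "X \<in> snd G" using uv by (auto simp: adj_in_def)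
    qed
    show "snd G \<subseteq> connected_sets G 2"
    proof
      fix e assume e: "e \<in> snd G"
      then obtain u v where uv: "e = {u, v}" "u \<noteq> v" "u \<in> fst G" "v \<in> fst G"
        using simple by (auto simp: simple_graph_def)
      then have "induced_path G ([u] @ [v])"
        unfolding induced_path_snoc[OF no_loop] using no_loop e by (simp add: induced_path_singleton)
      then show "e \<in> connected_sets G 2"
        using connected_set_induced_path[of G "[u, v]"] uv by (simp add: connected_sets_def)
    qed
  qed
  then show ?thesis by simp
qed

lemma card_induced_paths_eq_twice:
  assumes c: "2 \<le> c" "c \<le> k"
  shows "card (induced_paths G c) = 2 * card (connected_sets G c)"
proof -
  let ?F = "\<lambda>X. {s \<in> induced_paths G c. set s = X}"
  have paths: "induced_paths G c = (\<Union>X\<in>connected_sets G c. ?F X)"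
  proof
    show "induced_paths G c \<subseteq> (\<Union>X\<in>connected_sets G c. ?F X)"
    proof
      fix s assume s: "s \<in> induced_paths G c"
      then have path: "induced_path G s" and len: "length s = c" by (auto simp: induced_paths_def)
      then have "s \<noteq> []" using c by auto
      then have "set s \<in> connected_sets G c"
        using connected_set_induced_path[OF path] induced_path_card[OF path] len
        by (simp add: connected_sets_def)
      with s show "s \<in> (\<Union>X\<in>connected_sets G c. ?F X)" by blast
    qed
  qed blast
  have two: "card (?F X) = 2" if X: "X \<in> connected_sets G c" for X
  proof -
    obtain s where s: "induced_path G s" "set s = X"
      using connected_set_induced_path_exists X c by (auto simp: connected_sets_def)
    have len: "length s = c" using induced_path_card[OF s(1)] s(2) X by (simp add: connected_sets_def)
    have "?F X = {s, rev s}"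
    proof
      show "?F X \<subseteq> {s, rev s}"
      proof
        fix t assume "t \<in> ?F X"
        then have "induced_path G t" "set s = set t" using s(2) by (auto simp: induced_paths_def)
        then show "t \<in> {s, rev s}" using induced_path_unique[OF s(1)] by blast
      qed
      show "{s, rev s} \<subseteq> ?F X"
        using s induced_path_rev[OF s(1)] len by (simp add: induced_paths_def)
    qed
    moreover have "s \<noteq> rev s"
    proof
      assume "s = rev s"
      moreover have "rev s!0 = s!(c - 1)" using len c rev_nth[of 0 s] by simp
      ultimately have "s!0 = s!(c - 1)" by simp
      then show False using s(1) len c by (simp add: induced_path_def nth_eq_iff_index_eq)
    qed
    ultimately show ?thesis by simp
  qed
  have "card (\<Union>X\<in>connected_sets G c. ?F X) = (\<Sum>X\<in>connected_sets G c. card (?F X))"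
  proof (rule card_UN_disjoint)
    show "finite (connected_sets G c)" by (rule finite_connected_sets[OF finite_vertices])
    show "\<forall>X\<in>connected_sets G c. finite (?F X)"
      using finite_induced_paths[OF finite_vertices] by simp
    show "\<forall>X\<in>connected_sets G c. \<forall>Y\<in>connected_sets G c. X \<noteq> Y \<longrightarrow> ?F X \<inter> ?F Y = {}"
      by blast
  qed
  also have "\<dots> = (\<Sum>X\<in>connected_sets G c. 2)" using two by (rule sum.cong[OF refl])
  finally show ?thesis by (simp add: paths[symmetric])
qed

lemma card_induced_paths_Suc:
  "card (induced_paths G (Suc c)) = (\<Sum>s\<in>induced_paths G c. card {w. induced_path G (s @ [w])})"
proof -
  let ?E = "\<lambda>s. {w. induced_path G (s @ [w])}"
  have paths: "induced_paths G (Suc c) = (\<Union>s\<in>induced_paths G c. (\<lambda>w. s @ [w]) ` ?E s)"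
  proof
    show "induced_paths G (Suc c) \<subseteq> (\<Union>s\<in>induced_paths G c. (\<lambda>w. s @ [w]) ` ?E s)"
    proof
      fix t assume "t \<in> induced_paths G (Suc c)"
      then have t: "induced_path G t" "length t = Suc c" by (auto simp: induced_paths_def)
      then have split: "t = butlast t @ [last t]" by (metis append_butlast_last_id list.size(3) nat.distinct(1))
      then have "induced_path G (butlast t)"
        using t(1) induced_path_snoc[OF no_loop, of "butlast t" "last t"] by simp
      moreover have "length (butlast t) = c" using t(2) by simp
      ultimately show "t \<in> (\<Union>s\<in>induced_paths G c. (\<lambda>w. s @ [w]) ` ?E s)"
        using split t(1) by (auto simp: induced_paths_def intro!: bexI[of _ "butlast t"])
    qed
    show "(\<Union>s\<in>induced_paths G c. (\<lambda>w. s @ [w]) ` ?E s) \<subseteq> induced_paths G (Suc c)"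
      by (auto simp: induced_paths_def)
  qed
  have finite_E: "finite (?E s)" for s
    by (rule finite_subset[OF _ finite_vertices]) (auto simp: induced_path_def)
  have "card (\<Union>s\<in>induced_paths G c. (\<lambda>w. s @ [w]) ` ?E s) =
      (\<Sum>s\<in>induced_paths G c. card ((\<lambda>w. s @ [w]) ` ?E s))"
    using finite_induced_paths[OF finite_vertices] finite_E by (intro card_UN_disjoint) auto
  also have "\<dots> = (\<Sum>s\<in>induced_paths G c. card (?E s))"
    by (intro sum.cong refl card_image) (auto simp: inj_on_def)
  finally show ?thesis by (simp only: paths)
qed

lemma extensions_singleton:
  assumes "v \<in> fst G" shows "{w. induced_path G [v, w]} = nbrs G v"
proof -
  have "induced_path G [v, w] \<longleftrightarrow> w \<in> nbrs G v" for w
    using induced_path_snoc[OF no_loop, of "[v]" w] assms edge_vertices no_loop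
    by (auto simp: induced_path_singleton mem_nbrs insert_commute)
  then show ?thesis by blast
qed

lemma extensions_eq:
  assumes s: "induced_path G s" and len: "2 \<le> length s" "length s < k"
  shows "{w. induced_path G (s @ [w])} = nbrs G (last s) - {s!(length s - 2)}"
proof -
  let ?n = "length s"
  have ne: "s \<noteq> []" using len by auto
  then have last: "last s = s!(?n - 1)" by (simp add: last_conv_nth)
  show ?thesis
  proof
    show "{w. induced_path G (s @ [w])} \<subseteq> nbrs G (last s) - {s!(?n - 2)}"
    proof
      fix w assume "w \<in> {w. induced_path G (s @ [w])}"
      then have "w \<notin> set s" "{s!(?n - 1), w} \<in> snd G"
        using induced_path_snoc[OF no_loop] len by auto
      then show "w \<in> nbrs G (last s) - {s!(?n - 2)}"
        using last len by (auto simp: mem_nbrs insert_commute)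
    qed
    show "nbrs G (last s) - {s!(?n - 2)} \<subseteq> {w. induced_path G (s @ [w])}"
    proof
      fix w assume w: "w \<in> nbrs G (last s) - {s!(?n - 2)}"
      then have e: "{last s, w} \<in> snd G" by (simp add: mem_nbrs insert_commute)
      have "w \<notin> set s"
      proof
        assume "w \<in> set s"
        then obtain j where j: "j < ?n" "w = s!j" by (auto simp: in_set_conv_nth)
        then have "j = Suc (?n - 1) \<or> ?n - 1 = Suc j"
          using induced_path_edgeD[OF s, of "?n - 1" j] e last len by simp
        then have "j = ?n - 2" using j by auto
        then show False using w j by simp
      qed
      then show "w \<in> {w. induced_path G (s @ [w])}"
        using induced_path_snoc_nbr[OF s ne _ e len(2)] by simp
    qed
  qed
qed

lemma nbrs_closed_between_leaves:
  assumes s: "induced_path G s" and len: "2 \<le> length s"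
    and ends: "degree G (s!0) \<le> 1" "degree G (last s) \<le> 1"
  shows "\<forall>x\<in>set s. nbrs G x \<subseteq> set s"
proof
  let ?n = "length s"
  fix x assume "x \<in> set s"
  then obtain i where i: "i < ?n" "x = s!i" by (auto simp: in_set_conv_nth)
  have ne: "s \<noteq> []" using len by auto
  then have last: "last s = s!(?n - 1)" by (simp add: last_conv_nth)
  consider "i = 0" | "Suc i = ?n" | "0 < i" "Suc i < ?n" using i by linarith
  then show "nbrs G x \<subseteq> set s"
  proof cases
    case 1
    have "{s!1, s!0} \<in> snd G" using induced_path_edge[OF s, of 0] len by (simp add: insert_commute)
    then have "nbrs G x \<subseteq> {s!1}" using nbr_unique[OF ends(1)] 1 i by (auto simp: mem_nbrs)
    then show ?thesis using len by auto
  next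
    case 2
    have edge: "{s!(?n - 2), s!(?n - 1)} \<in> snd G"
      using induced_path_edge[OF s, of "?n - 2"] len by (simp add: Suc_diff_Suc numeral_2_eq_2)
    have "i = ?n - 1" using 2 by simp
    with i last have "x = last s" by simp
    with edge have "nbrs G x \<subseteq> {s!(?n - 2)}" using nbr_unique[OF ends(2)] last by (auto simp: mem_nbrs)
    then show ?thesis using len by auto
  next
    case 3
    then show ?thesis using induced_path_interior_nbrs[OF s] i by auto
  qed
qed

lemma leaf_path_exists:
  assumes v: "v \<in> leaves G" and c: "1 \<le> c" "c < k"
  shows "\<exists>s. induced_path G s \<and> length s = c \<and> s!0 = v"
  using c
proof (induction c rule: nat_induct_at_least)
  case base
  have "induced_path G [v]" using v no_loop by (simp add: leaves_def induced_path_singleton)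
  then show ?case by (intro exI[of _ "[v]"]) simp
next
  case (Suc c)
  then obtain s where s: "induced_path G s" "length s = c" "s!0 = v" by auto
  have ne: "s \<noteq> []" using s(2) Suc.hyps by auto
  show ?case
  proof (cases "c = 1")
    case True
    then have s_eq: "s = [v]" using s(2,3) by (cases s) auto
    have "degree G v = 1" "v \<in> fst G" using v by (auto simp: leaves_def)
    then obtain w where "w \<in> nbrs G v" by (metis card.empty ex_in_conv degree_eq_card_nbrs zero_neq_one)
    then have "induced_path G [v, w]" using extensions_singleton[OF \<open>v \<in> fst G\<close>] by blast
    then show ?thesis using s_eq True by (intro exI[of _ "[v, w]"]) simp
  next
    case False
    then have len: "2 \<le> length s" using s(2) Suc.hyps by simp
    let ?u = "last s"
    have pred: "s!(c - 2) \<in> nbrs G ?u"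
      using induced_path_edge[OF s(1), of "c - 2"] len s(2) ne
      by (simp add: mem_nbrs last_conv_nth Suc_diff_Suc numeral_2_eq_2)
    have "degree G ?u = 2"
    proof (rule ccontr)
      assume "degree G ?u \<noteq> 2"
      moreover have "?u \<in> fst G" using s(1) ne by (auto simp: induced_path_def)
      ultimately have "degree G ?u \<le> 1" using degree_le_two by fastforce
      moreover have "degree G (s!0) \<le> 1" using v s(3) by (simp add: leaves_def)
      ultimately have "\<forall>x\<in>set s. nbrs G x \<subseteq> set s" using nbrs_closed_between_leaves[OF s(1) len] by blast
      moreover have "v \<in> set s" "v \<in> fst G" "degree G v \<noteq> 2" using v s ne by (auto simp: leaves_def)
      ultimately have "k - 1 \<le> card (set s)" using card_closed_with_leaf by blast
      then show False using induced_path_card[OF s(1)] s(2) Suc.prems by simp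
    qed
    then have "card (nbrs G ?u - {s!(c - 2)}) = 1"
      using card_Diff_singleton[OF pred] by (simp add: degree_eq_card_nbrs)
    then have "nbrs G ?u - {s!(c - 2)} \<noteq> {}" by (metis card.empty zero_neq_one)
    then obtain w where "w \<in> nbrs G ?u - {s!(length s - 2)}" using s(2) by auto
    then have "induced_path G (s @ [w])"
      using extensions_eq[OF s(1) len] s(2) Suc.prems by auto
    moreover have "(s @ [w])!0 = v" using s(3) ne by (simp add: nth_append)
    ultimately show ?thesis using s(2) by (intro exI[of _ "s @ [w]"]) simp
  qed
qed

lemma card_leaf_paths:
  assumes v: "v \<in> leaves G" and c: "1 \<le> c" "c < k"
  shows "card {s \<in> induced_paths G c. s!0 = v} = 1"
proof -
  obtain s where s: "induced_path G s" "length s = c" "s!0 = v" using leaf_path_exists[OF v c] by blast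
  have unique: "t = s" if t: "induced_path G t" "length t = c" "t!0 = v" for t
  proof (rule induced_path_eqI[OF t(1) s(1)])
    show "length t = length s" "0 < length t \<Longrightarrow> t!0 = s!0" using s t by simp_all
    assume "1 < length t"
    then have e: "{s!1, v} \<in> snd G" "{t!1, v} \<in> snd G"
      using induced_path_edge[OF t(1), of 0] induced_path_edge[OF s(1), of 0] s t
      by (simp_all add: insert_commute)
    have "degree G v \<le> 1" using v by (simp add: leaves_def)
    then show "t!1 = s!1" by (rule nbr_unique[OF _ e])
  qed
  have "{s \<in> induced_paths G c. s!0 = v} = {s}"
  proof
    show "{s \<in> induced_paths G c. s!0 = v} \<subseteq> {s}"
      using unique by (auto simp: induced_paths_def simp del: insert_subset)
    show "{s} \<subseteq> {s \<in> induced_paths G c. s!0 = v}" using s by (simp add: induced_paths_def)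
  qed
  then show ?thesis by simp
qed

lemma card_paths_ending_in_leaves:
  assumes c: "1 \<le> c" "c < k"
  shows "card {s \<in> induced_paths G c. last s \<in> leaves G} = card (leaves G)"
proof -
  have "bij_betw rev {s \<in> induced_paths G c. last s \<in> leaves G} {s \<in> induced_paths G c. s!0 \<in> leaves G}"
  proof (rule bij_betw_byWitness[where f' = rev])
    have "rev s!0 = last s" "last (rev s) = s!0" if "length s = c" for s :: "'a list"
    proof -
      have "s \<noteq> []" using that c by auto
      then show "rev s!0 = last s" "last (rev s) = s!0"
        by (simp_all add: rev_nth last_conv_nth last_rev hd_conv_nth)
    qed
    then show "rev ` {s \<in> induced_paths G c. last s \<in> leaves G} \<subseteq> {s \<in> induced_paths G c. s!0 \<in> leaves G}"
      and "rev ` {s \<in> induced_paths G c. s!0 \<in> leaves G} \<subseteq> {s \<in> induced_paths G c. last s \<in> leaves G}"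
      by (auto simp: induced_paths_def induced_path_rev)
  qed simp_all
  then have "card {s \<in> induced_paths G c. last s \<in> leaves G} = card {s \<in> induced_paths G c. s!0 \<in> leaves G}"
    by (rule bij_betw_same_card)
  also have "{s \<in> induced_paths G c. s!0 \<in> leaves G} = (\<Union>v\<in>leaves G. {s \<in> induced_paths G c. s!0 = v})"
    by blast
  also have "card \<dots> = (\<Sum>v\<in>leaves G. card {s \<in> induced_paths G c. s!0 = v})"
    using finite_vertices finite_induced_paths[OF finite_vertices]
    by (intro card_UN_disjoint) (auto simp: leaves_def)
  also have "\<dots> = card (leaves G)" using card_leaf_paths c by simp
  finally show ?thesis .
qed

lemma card_induced_paths_step:
  assumes c: "2 \<le> c" "c < k"
  shows "card (induced_paths G (Suc c)) + card (leaves G) = card (induced_paths G c)"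
proof -
  have ext: "card {w. induced_path G (s @ [w])} = (if last s \<in> leaves G then 0 else 1)"
    if s: "s \<in> induced_paths G c" for s
  proof -
    have path: "induced_path G s" and len: "length s = c" using s by (auto simp: induced_paths_def)
    have ne: "s \<noteq> []" using len c by auto
    have pred: "s!(c - 2) \<in> nbrs G (last s)"
      using induced_path_edge[OF path, of "c - 2"] len c ne
      by (simp add: mem_nbrs last_conv_nth Suc_diff_Suc numeral_2_eq_2)
    have "last s \<in> fst G" using path ne by (auto simp: induced_path_def)
    moreover have "degree G (last s) \<noteq> 0"
      using pred finite_nbrs by (auto simp: degree_eq_card_nbrs)
    ultimately have "degree G (last s) = 1 \<or> degree G (last s) = 2"
      using degree_le_two[of "last s"] by linarith
    moreover have "{w. induced_path G (s @ [w])} = nbrs G (last s) - {s!(c - 2)}"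
      using extensions_eq[OF path] len c by simp
    then have "card {w. induced_path G (s @ [w])} = degree G (last s) - 1"
      using card_Diff_singleton[OF pred] by (simp add: degree_eq_card_nbrs)
    ultimately show ?thesis using \<open>last s \<in> fst G\<close> by (auto simp: leaves_def)
  qed
  have "card (induced_paths G (Suc c)) = (\<Sum>s\<in>induced_paths G c. if last s \<in> leaves G then 0 else 1)"
    using card_induced_paths_Suc ext by simp
  also have "\<dots> = card {s \<in> induced_paths G c. last s \<notin> leaves G}"
    using finite_induced_paths[OF finite_vertices] by (simp add: sum.If_cases Int_def)
  moreover have "card (induced_paths G c) = card {s \<in> induced_paths G c. last s \<notin> leaves G} +
      card {s \<in> induced_paths G c. last s \<in> leaves G}"
  proof -
    have "induced_paths G c = {s \<in> induced_paths G c. last s \<notin> leaves G} \<union>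
        {s \<in> induced_paths G c. last s \<in> leaves G}" by blast
    moreover have "card ({s \<in> induced_paths G c. last s \<notin> leaves G} \<union>
        {s \<in> induced_paths G c. last s \<in> leaves G}) = card {s \<in> induced_paths G c. last s \<notin> leaves G} +
        card {s \<in> induced_paths G c. last s \<in> leaves G}"
      using finite_induced_paths[OF finite_vertices, of c] by (intro card_Un_disjoint) auto
    ultimately show ?thesis by simp
  qed
  ultimately have "card (induced_paths G (Suc c)) + card {s \<in> induced_paths G c. last s \<in> leaves G} =
      card (induced_paths G c)" by simp
  then show ?thesis using card_paths_ending_in_leaves c by simp
qed

lemma sum_degree:
  assumes "2 \<le> k" shows "(\<Sum>v\<in>fst G. degree G v) = 2 * card (snd G)"
proof -
  have "induced_paths G 1 = (\<lambda>v. [v]) ` fst G"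
    using no_loop by (auto simp: induced_paths_def induced_path_def length_Suc_conv)
  then have "(\<Sum>v\<in>fst G. degree G v) = (\<Sum>s\<in>induced_paths G 1. card {w. induced_path G (s @ [w])})"
    by (simp add: sum.reindex inj_on_def extensions_singleton degree_eq_card_nbrs)
  also have "\<dots> = card (induced_paths G 2)" using card_induced_paths_Suc[of 1] by (simp add: numeral_2_eq_2)
  also have "\<dots> = 2 * card (snd G)" using card_induced_paths_eq_twice[of 2] assms card_connected_sets_2 by simp
  finally show ?thesis .
qed

lemma card_leaves:
  assumes "3 \<le> k" shows "card (leaves G) + 2 * card (snd G) = 2 * card (fst G)"
proof -
  have "degree G v = (if v \<in> leaves G then 1 else 2)" if v: "v \<in> fst G" for v
  proof -
    have "degree G v \<noteq> 0"
    proof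
      assume "degree G v = 0"
      then have "nbrs G v = {}" using finite_nbrs by (simp add: degree_eq_card_nbrs)
      then have "k - 1 \<le> card {v}" using card_closed_with_leaf[of v "{v}"] v \<open>degree G v = 0\<close> by simp
      with assms show False by simp
    qed
    then show ?thesis using degree_le_two[OF v] v by (auto simp: leaves_def)
  qed
  then have "2 * card (snd G) = (\<Sum>v\<in>fst G. if v \<in> leaves G then 1 else 2)"
    using sum_degree assms by simp
  also have "\<dots> = card (leaves G) + 2 * card (fst G - leaves G)"
  proof -
    have "leaves G \<subseteq> fst G" by (auto simp: leaves_def)
    then have "fst G \<inter> leaves G = leaves G" "fst G \<inter> - leaves G = fst G - leaves G" by auto
    then show ?thesis using finite_vertices by (simp add: sum.If_cases)
  qed
  also have "card (fst G - leaves G) = card (fst G) - card (leaves G)"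
    using finite_vertices by (intro card_Diff_subset) (auto simp: leaves_def)
  finally show ?thesis
    using card_mono[OF finite_vertices, of "leaves G"] by (simp add: leaves_def)
qed

lemma card_induced_paths_formula:
  assumes "2 \<le> c" "c \<le> k"
  shows "card (induced_paths G c) + (c - 2) * card (leaves G) = 2 * card (snd G)"
  using assms
proof (induction c rule: nat_induct_at_least)
  case base
  then show ?case using card_induced_paths_eq_twice[of 2] card_connected_sets_2 by simp
next
  case (Suc c)
  then have "card (induced_paths G (Suc c)) + card (leaves G) = card (induced_paths G c)"
    by (intro card_induced_paths_step) auto
  moreover have "Suc c - 2 = Suc (c - 2)" using Suc.hyps by simp
  ultimately show ?case using Suc by simp
qed

lemma card_connected_sets_formula:
  assumes c: "2 \<le> c" "c \<le> k"
  shows "card (connected_sets G c) + (c - 2) * (card (fst G) - card (snd G)) = card (snd G)"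
proof (cases "c = 2")
  case True
  then show ?thesis using card_connected_sets_2 by simp
next
  case False
  then have "card (leaves G) = 2 * (card (fst G) - card (snd G))" using card_leaves c by simp
  then have "2 * card (connected_sets G c) + 2 * ((c - 2) * (card (fst G) - card (snd G))) = 2 * card (snd G)"
    using card_induced_paths_formula[OF c] card_induced_paths_eq_twice[OF c] by (simp add: algebra_simps)
  then show ?thesis by simp
qed

end

section \<open>Graphs with equal numbers of vertices and edges\<close>

lemma card_connected_sets_eq:
  assumes G: "deg2_graph G k" and G': "deg2_graph G' k"
    and n: "card (fst G) = card (fst G')" and m: "card (snd G) = card (snd G')" and a: "a \<le> k"
  shows "card (connected_sets G a) = card (connected_sets G' a)"
proof -
  consider "a = 0" | "a = 1" | "2 \<le> a" by linarith
  then show ?thesis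
  proof cases
    case 1
    then show ?thesis
      using card_connected_sets_0 deg2_graph.finite_vertices[OF G] deg2_graph.finite_vertices[OF G'] by metis
  next
    case 2
    then show ?thesis using card_connected_sets_1 n by metis
  next
    case 3
    then show ?thesis
      using deg2_graph.card_connected_sets_formula[OF G 3 a] deg2_graph.card_connected_sets_formula[OF G' 3 a] n m
      by simp
  qed
qed

lemma card_families_eq:
  assumes G: "deg2_graph G k" and G': "deg2_graph G' k"
    and n: "card (fst G) = card (fst G')" and m: "card (snd G) = card (snd G')"
  shows "sum_mset M \<le> k \<Longrightarrow> card (families G M) = card (families G' M)"
proof (induction "size M" arbitrary: M rule: less_induct)
  case less
  show ?case
  proof (cases M)
    case empty
    then show ?thesis by (simp add: families_empty)
  next
    case (add a M0)
    have small: "sum_mset M0 + a \<le> k" using less.prems add by simp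
    have smaller: "card (families G (add_mset b (M0 - N))) = card (families G' (add_mset b (M0 - N)))"
      if N: "N \<in> {N. N \<subseteq># M0 \<and> N \<noteq> {#}}" and b: "b \<le> a + sum_mset N" for N b
    proof (rule less.hyps)
      have "0 < size N" "size N \<le> size M0" using N by (auto simp: size_mset_mono nonempty_has_size)
      moreover have "size (M0 - N) = size M0 - size N" using N by (simp add: size_Diff_submset)
      ultimately show "size (add_mset b (M0 - N)) < size M" using add by simp
      have "sum_mset N \<le> sum_mset M0" using N by (auto simp: subset_mset.le_iff_add)
      then show "sum_mset (add_mset b (M0 - N)) \<le> k" using N b small by (simp add: sum_mset_diff)
    qed
    have "card (touching_pairs G M0 a) = card (touching_pairs G' M0 a)"
      unfolding deg2_graph.card_touching_pairs[OF G small] deg2_graph.card_touching_pairs[OF G' small]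
      using smaller by (intro sum.cong refl) simp
    moreover have "card (families G M0) = card (families G' M0)" using less add by simp
    moreover have "card (connected_sets G a) = card (connected_sets G' a)"
      using card_connected_sets_eq[OF G G' n m] small by simp
    ultimately have "card (families G M) * count M a = card (families G' M) * count M a"
      using card_families_times_connected_sets[OF deg2_graph.finite_vertices[OF G], of M0 a]
        card_families_times_connected_sets[OF deg2_graph.finite_vertices[OF G'], of M0 a] add
      by simp
    moreover have "count M a \<noteq> 0" using add by simp
    ultimately show ?thesis by simp
  qed
qed

theorem corollary3p2:
  fixes k :: nat and G :: "'a graph" and G' :: "'b graph"
  assumes "k \<ge> 1"
    and "simple_graph G" and "simple_graph G'"
    and "max_degree_two G" and "max_degree_two G'"
    and "\<not> regular G" and "\<not> regular G'"
    and "card (fst G) = card (fst G')" and "card (snd G) = card (snd G')"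
    and "\<And>C. cycle_component G C \<Longrightarrow> card C > k"
    and "\<And>C. cycle_component G' C \<Longrightarrow> card C > k"
    and "\<And>C. path_component G C \<Longrightarrow> card C \<ge> k - 1"
    and "\<And>C. path_component G' C \<Longrightarrow> card C \<ge> k - 1"
  shows "same_deck k G G'"
proof -
  have G: "deg2_graph G k"
    using assms(2,4,10,12) by unfold_locales (auto simp: max_degree_two_def)
  have G': "deg2_graph G' k"
    using assms(3,5,11,13) by unfold_locales (auto simp: max_degree_two_def)
  show ?thesis
    using same_deck_if_card_families_eq[OF G G'] card_families_eq[OF G G' assms(8,9)] by simp
qed

end
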